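(* Let $H$ be a graph. The following are equivalent: (i) for every $H$-free graph $G$ and every integer $\ell \ge \chi(G)+1$, the graph $G$ is $\ell$-mixing; (ii) $H$ is an induced subgraph of $P_4$ or an induced subgraph of $P_3+P_1$.
   Context: All graphs are finite and simple. A $k$-colouring of $G$ is a map $\alpha: V(G)\to\{1,\dots,k\}$ with $\alpha(u)\neq\alpha(v)$ for every edge $uv$; $\chi(G)$ is the least $k$ for which a $k$-colouring exists. The reconfiguration graph $\mathcal{R}_k(G)$ has the $k$-colourings of $G$ as vertices, two colourings being adjacent if they differ on exactly one vertex. $G$ is $k$-mixing if $\mathcal{R}_k(G)$ is connected. A graph is $H$-free if it has no induced subgraph isomorphic to $H$. $P_n$ is the path on $n$ vertices, and $G_1+G_2$ denotes the disjoint union of $G_1$ and $G_2$. *)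

theory Defs
  imports Main
begin

definition simple_graph :: "'a set \<Rightarrow> 'a set set \<Rightarrow> bool" where
  "simple_graph V E \<longleftrightarrow> finite V \<and>
     (\<forall>e\<in>E. \<exists>u v. e = {u, v} \<and> u \<noteq> v \<and> u \<in> V \<and> v \<in> V)"

text \<open>k-colourings alpha : V -> {1..k}; outside V the map is fixed to 0 so that
  colourings are determined by their values on V.\<close>
definition colourings :: "'a set \<Rightarrow> 'a set set \<Rightarrow> nat \<Rightarrow> ('a \<Rightarrow> nat) set" where
  "colourings V E k = {\<alpha>. (\<forall>v\<in>V. \<alpha> v \<in> {1..k}) \<and> (\<forall>v. v \<notin> V \<longrightarrow> \<alpha> v = 0)
      \<and> (\<forall>u v. {u, v} \<in> E \<longrightarrow> \<alpha> u \<noteq> \<alpha> v)}"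

definition chromatic_number :: "'a set \<Rightarrow> 'a set set \<Rightarrow> nat" where
  "chromatic_number V E = (LEAST k. colourings V E k \<noteq> {})"

text \<open>Edge relation of the reconfiguration graph R_k(G): colourings differing on
  exactly one vertex.\<close>
definition recolour_rel :: "'a set \<Rightarrow> 'a set set \<Rightarrow> nat \<Rightarrow> (('a \<Rightarrow> nat) \<times> ('a \<Rightarrow> nat)) set" where
  "recolour_rel V E k = {(\<alpha>, \<beta>). \<alpha> \<in> colourings V E k \<and> \<beta> \<in> colourings V E k
      \<and> card {v. \<alpha> v \<noteq> \<beta> v} = 1}"

text \<open>G is k-mixing iff R_k(G) is connected.\<close>
definition mixing :: "'a set \<Rightarrow> 'a set set \<Rightarrow> nat \<Rightarrow> bool" where
  "mixing V E k \<longleftrightarrow>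
     (\<forall>\<alpha>\<in>colourings V E k. \<forall>\<beta>\<in>colourings V E k. (\<alpha>, \<beta>) \<in> (recolour_rel V E k)\<^sup>*)"

definition induced_subgraph :: "'a set \<Rightarrow> 'a set set \<Rightarrow> 'b set \<Rightarrow> 'b set set \<Rightarrow> bool" where
  "induced_subgraph VH EH VG EG \<longleftrightarrow> (\<exists>f. inj_on f VH \<and> f ` VH \<subseteq> VG \<and>
     (\<forall>u\<in>VH. \<forall>v\<in>VH. {u, v} \<in> EH \<longleftrightarrow> {f u, f v} \<in> EG))"

definition P4_V :: "nat set" where "P4_V = {0, 1, 2, 3}"
definition P4_E :: "nat set set" where "P4_E = {{0, 1}, {1, 2}, {2, 3}}"

definition P3P1_V :: "nat set" where "P3P1_V = {0, 1, 2, 3}"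
definition P3P1_E :: "nat set set" where "P3P1_E = {{0, 1}, {1, 2}}"

end

theory Submission
  imports Defs
begin

text \<open>
  (ii) \<open>\<Longrightarrow>\<close> (i). Call a graph mixing above its chromatic number if, for every palette with more
  than \<open>\<chi>\<close> colours, any two of its colourings are joined by single-vertex recolourings. By induction
  on the number of vertices this holds as soon as every colouring can be recoloured into one that
  misses a colour: then move a colour class of an optimal colouring to the missing colour and
  recolour the rest, which needs one colour less, by induction. A colour can be freed if the graph
  or its complement is disconnected, by recolouring the parts with few colours, and if the graph
  has no independent set of size three, since then colour classes have at most two vertices and a
  vertex whose class in an optimal colouring is a pair can repeatedly join a singleton class. Every
  \<open>P\<^sub>4\<close>-free graph on at least two vertices decomposes in this way (Seinsche), and so does every
  \<open>(P\<^sub>3 + P\<^sub>1)\<close>-free graph with an independent triple.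

  (i) \<open>\<Longrightarrow>\<close> (ii). \<open>C\<^sub>6\<close> is bipartite but has a frozen 3-colouring, and a \<open>2K\<^sub>2\<close>-free graph on ten
  vertices has a proper 4-colouring and a frozen 5-colouring. So \<open>H\<close> is a \<open>2K\<^sub>2\<close>-free induced
  subgraph of \<open>C\<^sub>6\<close>, and these are exactly the induced subgraphs of \<open>P\<^sub>4\<close> and of \<open>P\<^sub>3 + P\<^sub>1\<close>.
\<close>

section \<open>Recolouring with arbitrary palettes\<close>

definition proper_colouring :: "'a set \<Rightarrow> 'a set set \<Rightarrow> nat set \<Rightarrow> ('a \<Rightarrow> nat) \<Rightarrow> bool" where
  "proper_colouring V E C \<alpha> \<longleftrightarrow>
     \<alpha> ` V \<subseteq> C \<and> (\<forall>u\<in>V. \<forall>v\<in>V. {u, v} \<in> E \<longrightarrow> \<alpha> u \<noteq> \<alpha> v)"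

definition recolour_step :: "'a set \<Rightarrow> 'a set set \<Rightarrow> nat set \<Rightarrow> (('a \<Rightarrow> nat) \<times> ('a \<Rightarrow> nat)) set" where
  "recolour_step V E C = {(\<alpha>, \<beta>). proper_colouring V E C \<alpha> \<and> proper_colouring V E C \<beta> \<and>
      (\<exists>v\<in>V. \<forall>u. u \<noteq> v \<longrightarrow> \<alpha> u = \<beta> u)}"

definition colourable :: "'a set \<Rightarrow> 'a set set \<Rightarrow> nat \<Rightarrow> bool" where
  "colourable V E k \<longleftrightarrow> (\<exists>C \<gamma>. finite C \<and> card C \<le> k \<and> proper_colouring V E C \<gamma>)"

abbreviation recolour_path :: "'a set \<Rightarrow> 'a set set \<Rightarrow> nat set \<Rightarrow> ('a \<Rightarrow> nat) \<Rightarrow> ('a \<Rightarrow> nat) \<Rightarrow> bool" where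
  "recolour_path V E C \<alpha> \<beta> \<equiv> (\<alpha>, \<beta>) \<in> (recolour_step V E C)\<^sup>*"

lemma recolour_path_sym:
  assumes "recolour_path V E C \<alpha> \<beta>"
  shows "recolour_path V E C \<beta> \<alpha>"
proof -
  have "sym (recolour_step V E C)"
    unfolding recolour_step_def sym_def by (auto simp: eq_commute)
  then show ?thesis
    using assms by (metis sym_rtrancl symD)
qed

lemma recolour_path_outside:
  assumes "recolour_path V E C \<alpha> \<beta>" and "u \<notin> V"
  shows "\<beta> u = \<alpha> u"
  using assms(1)
proof induction
  case (step \<beta> \<gamma>)
  then obtain v where "v \<in> V" "\<forall>w. w \<noteq> v \<longrightarrow> \<beta> w = \<gamma> w"
    unfolding recolour_step_def by blast
  then show ?case
    using step.IH assms(2) by metis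
qed simp

lemma recolour_path_proper:
  assumes "recolour_path V E C \<alpha> \<beta>" and "proper_colouring V E C \<alpha>"
  shows "proper_colouring V E C \<beta>"
  using assms by induction (simp_all add: recolour_step_def)

lemma proper_colouring_mono:
  "proper_colouring V E C \<alpha> \<Longrightarrow> V' \<subseteq> V \<Longrightarrow> C \<subseteq> C' \<Longrightarrow> proper_colouring V' E C' \<alpha>"
  unfolding proper_colouring_def by blast

lemma proper_colouring_image: "proper_colouring V E C \<alpha> \<Longrightarrow> X \<subseteq> V \<Longrightarrow> \<alpha> ` X \<subseteq> C"
  unfolding proper_colouring_def by blast

lemma colourable_mono: "colourable V E k \<Longrightarrow> V' \<subseteq> V \<Longrightarrow> colourable V' E k"
  unfolding colourable_def using proper_colouring_mono[OF _ _ order_refl] by blast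

lemma colourable_palette:
  assumes "colourable V E k" and "finite C" and "k \<le> card C"
  obtains \<rho> where "proper_colouring V E C \<rho>"
proof -
  obtain C0 \<gamma> where "finite C0" "card C0 \<le> k" and \<gamma>: "proper_colouring V E C0 \<gamma>"
    using assms(1) unfolding colourable_def by blast
  moreover have "card C0 \<le> card C"
    using \<open>card C0 \<le> k\<close> assms(3) by linarith
  ultimately obtain f where f: "inj_on f C0" "f ` C0 \<subseteq> C"
    using card_le_inj[OF _ assms(2)] by blast
  have "proper_colouring V E C (f \<circ> \<gamma>)"
    unfolding proper_colouring_def
  proof
    show "(f \<circ> \<gamma>) ` V \<subseteq> C"
      using \<gamma> f(2) unfolding proper_colouring_def image_comp[symmetric] by blast
    show "\<forall>u\<in>V. \<forall>v\<in>V. {u, v} \<in> E \<longrightarrow> (f \<circ> \<gamma>) u \<noteq> (f \<circ> \<gamma>) v"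
      using \<gamma> f(1) unfolding proper_colouring_def inj_on_def by (simp add: image_subset_iff) blast
  qed
  then show thesis by (rule that)
qed

definition independent_set :: "'a set \<Rightarrow> 'a set set \<Rightarrow> bool" where
  "independent_set S E \<longleftrightarrow> (\<forall>u\<in>S. \<forall>v\<in>S. {u, v} \<notin> E)"

lemma proper_colouring_extend:
  assumes \<gamma>: "proper_colouring V' E C' \<gamma>" and \<alpha>: "proper_colouring V E C \<alpha>"
    and "V' \<subseteq> V" "C' \<subseteq> C" and agree: "\<forall>u. u \<notin> V' \<longrightarrow> \<gamma> u = \<alpha> u"
    and border: "\<forall>u\<in>V'. \<forall>w\<in>V - V'. {u, w} \<in> E \<longrightarrow> \<alpha> w \<notin> C'"
  shows "proper_colouring V E C \<gamma>"
  unfolding proper_colouring_def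
proof (intro conjI ballI impI)
  show "\<gamma> ` V \<subseteq> C"
    using \<gamma> \<alpha> agree \<open>C' \<subseteq> C\<close> unfolding proper_colouring_def image_subset_iff
    by (metis subsetD)
  have border': "\<gamma> u \<noteq> \<gamma> w" if "u \<in> V'" "w \<in> V - V'" "{u, w} \<in> E" for u w
    using \<gamma> that border agree unfolding proper_colouring_def by (metis DiffD2 image_subset_iff)
  fix u v assume "u \<in> V" "v \<in> V" "{u, v} \<in> E"
  then show "\<gamma> u \<noteq> \<gamma> v"
    using \<gamma> \<alpha> agree border'[of u v] border'[of v u] unfolding proper_colouring_def
    by (cases "u \<in> V'"; cases "v \<in> V'") (simp_all add: insert_commute)
qed

lemma recolour_path_extend:
  assumes "recolour_path V' E C' \<alpha> \<beta>" "V' \<subseteq> V" "C' \<subseteq> C" "proper_colouring V E C \<alpha>"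
    and border: "\<forall>u\<in>V'. \<forall>w\<in>V - V'. {u, w} \<in> E \<longrightarrow> \<alpha> w \<notin> C'"
  shows "recolour_path V E C \<alpha> \<beta>"
  using assms(1)
proof induction
  case (step \<beta> \<gamma>)
  have extend: "proper_colouring V E C \<delta>"
    if "proper_colouring V' E C' \<delta>" "recolour_path V' E C' \<alpha> \<delta>" for \<delta>
    using proper_colouring_extend[OF that(1) assms(4,2,3) _ border] recolour_path_outside[OF that(2)]
    by blast
  have "recolour_path V' E C' \<alpha> \<gamma>"
    using step.hyps by (rule rtrancl_into_rtrancl)
  moreover obtain v where "proper_colouring V' E C' \<beta>" "proper_colouring V' E C' \<gamma>"
    "v \<in> V'" "\<forall>u. u \<noteq> v \<longrightarrow> \<beta> u = \<gamma> u"
    using step.hyps(2) unfolding recolour_step_def by blast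
  ultimately have "(\<beta>, \<gamma>) \<in> recolour_step V E C"
    using step.hyps(1) extend \<open>V' \<subseteq> V\<close> unfolding recolour_step_def by blast
  then show ?case
    by (rule rtrancl_into_rtrancl[OF step.IH])
qed simp

lemma recolour_independent_set:
  assumes \<alpha>: "proper_colouring V E C \<alpha>" and "S \<subseteq> V" "finite S" and S: "independent_set S E"
    and "e \<in> C" and "e \<notin> \<alpha> ` (V - S)"
  shows "recolour_path V E C \<alpha> (\<lambda>u. if u \<in> S then e else \<alpha> u)"
proof -
  have proper: "proper_colouring V E C (\<lambda>u. if u \<in> X then e else \<alpha> u)" if "X \<subseteq> S" for X
    unfolding proper_colouring_def
  proof (intro conjI ballI impI)
    show "(\<lambda>u. if u \<in> X then e else \<alpha> u) ` V \<subseteq> C"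
      using \<alpha> \<open>e \<in> C\<close> unfolding proper_colouring_def by auto
    fix u v assume uv: "u \<in> V" "v \<in> V" "{u, v} \<in> E"
    have "\<not> (u \<in> S \<and> v \<in> S)"
      using S uv(3) unfolding independent_set_def by blast
    moreover have "\<alpha> u \<noteq> \<alpha> v"
      using \<alpha> uv unfolding proper_colouring_def by blast
    ultimately show "(if u \<in> X then e else \<alpha> u) \<noteq> (if v \<in> X then e else \<alpha> v)"
      using \<open>e \<notin> \<alpha> ` (V - S)\<close> \<open>X \<subseteq> S\<close> uv(1,2) by auto
  qed
  have "recolour_path V E C \<alpha> (\<lambda>u. if u \<in> X then e else \<alpha> u)" if "X \<subseteq> S" for X
    using finite_subset[OF that \<open>finite S\<close>] that
  proof (induction X)
    case (insert a X)
    then have "((\<lambda>u. if u \<in> X then e else \<alpha> u), (\<lambda>u. if u \<in> insert a X then e else \<alpha> u))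
        \<in> recolour_step V E C"
      using proper[of X] proper[of "insert a X"] \<open>S \<subseteq> V\<close> unfolding recolour_step_def by auto
    with insert show ?case
      by (meson rtrancl_into_rtrancl insert_subset)
  qed simp
  then show ?thesis by blast
qed

section \<open>Mixing above the chromatic number\<close>

text \<open>Colourings are total functions of which only the values on \<open>V\<close> are constrained. Requiring
  agreement outside \<open>V\<close> lets recolourings of an induced subgraph be lifted to the whole graph.\<close>
definition mixing_above_chromatic :: "'a set \<Rightarrow> 'a set set \<Rightarrow> bool" where
  "mixing_above_chromatic V E \<longleftrightarrow> (\<forall>C k \<alpha> \<beta>. finite C \<longrightarrow> colourable V E k \<longrightarrow> k < card C \<longrightarrow>
     proper_colouring V E C \<alpha> \<longrightarrow> proper_colouring V E C \<beta> \<longrightarrow> (\<forall>u. u \<notin> V \<longrightarrow> \<alpha> u = \<beta> u) \<longrightarrow>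
     recolour_path V E C \<alpha> \<beta>)"

definition colour_freeable :: "'a set \<Rightarrow> 'a set set \<Rightarrow> bool" where
  "colour_freeable V E \<longleftrightarrow> (\<forall>C k \<alpha>. finite C \<longrightarrow> colourable V E k \<longrightarrow> k < card C \<longrightarrow>
     proper_colouring V E C \<alpha> \<longrightarrow> (\<exists>\<beta> c. recolour_path V E C \<alpha> \<beta> \<and> c \<in> C \<and> c \<notin> \<beta> ` V))"

lemma mixing_above_chromaticD:
  assumes "mixing_above_chromatic V E" "finite C" "colourable V E k" "k < card C"
    "proper_colouring V E C \<alpha>" "proper_colouring V E C \<beta>" "\<forall>u. u \<notin> V \<longrightarrow> \<alpha> u = \<beta> u"
  shows "recolour_path V E C \<alpha> \<beta>"
  using assms unfolding mixing_above_chromatic_def by blast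

lemma colour_freeableI:
  assumes "\<And>C k \<alpha>. finite C \<Longrightarrow> colourable V E k \<Longrightarrow> k < card C \<Longrightarrow> proper_colouring V E C \<alpha> \<Longrightarrow>
    \<exists>\<beta> c. recolour_path V E C \<alpha> \<beta> \<and> c \<in> C \<and> c \<notin> \<beta> ` V"
  shows "colour_freeable V E"
  using assms unfolding colour_freeable_def by blast

lemma colour_freeableE:
  assumes "colour_freeable V E" "finite C" "colourable V E k" "k < card C" "proper_colouring V E C \<alpha>"
  obtains \<beta> c where "recolour_path V E C \<alpha> \<beta>" "c \<in> C" "c \<notin> \<beta> ` V"
  using assms unfolding colour_freeable_def by blast

lemma colourable_remove_colour_class:
  assumes "colourable V E k" "v \<in> V"
  obtains S where "v \<in> S" "S \<subseteq> V" "independent_set S E" "colourable (V - S) E (k - 1)" "0 < k"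
proof -
  obtain C0 \<gamma> where "finite C0" "card C0 \<le> k" and \<gamma>: "proper_colouring V E C0 \<gamma>"
    using assms(1) unfolding colourable_def by blast
  define S where "S = {u \<in> V. \<gamma> u = \<gamma> v}"
  have "\<gamma> v \<in> C0"
    using \<gamma> assms(2) unfolding proper_colouring_def by blast
  then have "card (C0 - {\<gamma> v}) \<le> k - 1" "0 < k"
    using \<open>finite C0\<close> \<open>card C0 \<le> k\<close> card_gt_0_iff[of C0] by (auto simp: card_Diff_singleton)
  moreover have "proper_colouring (V - S) E (C0 - {\<gamma> v}) \<gamma>"
    using \<gamma> unfolding proper_colouring_def S_def by auto
  ultimately have "colourable (V - S) E (k - 1)"
    using \<open>finite C0\<close> unfolding colourable_def by blast
  moreover have "independent_set S E"
    unfolding independent_set_def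
  proof (intro ballI notI)
    fix u w assume "u \<in> S" "w \<in> S" "{u, w} \<in> E"
    then have "\<gamma> u \<noteq> \<gamma> w"
      using \<gamma> unfolding proper_colouring_def S_def by blast
    then show False
      using \<open>u \<in> S\<close> \<open>w \<in> S\<close> unfolding S_def by simp
  qed
  moreover have "v \<in> S" "S \<subseteq> V"
    using assms(2) unfolding S_def by auto
  ultimately show thesis
    using that \<open>0 < k\<close> by blast
qed

text \<open>First move \<open>S\<close> to the free colour \<open>e\<close>, then recolour \<open>V - S\<close> inside the palette \<open>C - {e}\<close>.\<close>
lemma recolour_to_split_colouring:
  assumes mix: "mixing_above_chromatic (V - S) E" and col: "colourable (V - S) E k"
    and "finite C" "Suc k < card C" and "S \<subseteq> V" "finite S" "independent_set S E"
    and \<alpha>: "proper_colouring V E C \<alpha>" and "e \<in> C" "e \<notin> \<alpha> ` V"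
    and \<rho>: "proper_colouring (V - S) E (C - {e}) \<rho>" and outside: "\<forall>u. u \<notin> V \<longrightarrow> \<delta> u = \<alpha> u"
  shows "recolour_path V E C \<alpha> (\<lambda>u. if u \<in> S then e else if u \<in> V then \<rho> u else \<delta> u)"
    (is "recolour_path V E C \<alpha> ?\<sigma>")
proof -
  define \<alpha>' where "\<alpha>' = (\<lambda>u. if u \<in> S then e else \<alpha> u)"
  have "recolour_path V E C \<alpha> \<alpha>'"
    unfolding \<alpha>'_def using recolour_independent_set[OF \<alpha> assms(5-7,9)] assms(10) by blast
  also have "recolour_path V E C \<alpha>' ?\<sigma>"
  proof (rule recolour_path_extend)
    have "k < card (C - {e})"
      using \<open>Suc k < card C\<close> \<open>e \<in> C\<close> \<open>finite C\<close> by (simp add: card_Diff_singleton)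
    moreover have "proper_colouring (V - S) E (C - {e}) \<alpha>'"
      using \<alpha> \<open>e \<notin> \<alpha> ` V\<close> unfolding \<alpha>'_def proper_colouring_def by auto
    moreover have "proper_colouring (V - S) E (C - {e}) ?\<sigma>"
      using \<rho> unfolding proper_colouring_def by auto
    moreover have "\<forall>u. u \<notin> V - S \<longrightarrow> \<alpha>' u = ?\<sigma> u"
      using outside unfolding \<alpha>'_def by simp
    ultimately show "recolour_path (V - S) E (C - {e}) \<alpha>' ?\<sigma>"
      using mixing_above_chromaticD[OF mix _ col] \<open>finite C\<close> by blast
    show "proper_colouring V E C \<alpha>'"
      using recolour_path_proper[OF \<open>recolour_path V E C \<alpha> \<alpha>'\<close> \<alpha>] .
    show "\<forall>u\<in>V - S. \<forall>w\<in>V - (V - S). {u, w} \<in> E \<longrightarrow> \<alpha>' w \<notin> C - {e}"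
      unfolding \<alpha>'_def by auto
  qed auto
  finally show ?thesis .
qed

lemma card_Diff_doubleton_ge: "finite C \<Longrightarrow> card C - 2 \<le> card (C - {e, e'})"
proof -
  assume "finite C"
  have "card {e, e'} \<le> 2"
    by (simp add: card_insert_if)
  then show ?thesis
    using diff_card_le_card_Diff[of "{e, e'}" C] by simp
qed

text \<open>Free colours \<open>e\<close>, \<open>e'\<close> in \<open>\<alpha>\<close> and \<open>\<beta>\<close>, move the colour class \<open>S\<close> to them, recolour the rest
  to a common \<open>(C - {e, e'})\<close>-colouring \<open>\<rho>\<close>, and finally move \<open>S\<close> from \<open>e\<close> to \<open>e'\<close>.\<close>
lemma recolour_path_via_colour_class:
  assumes free: "colour_freeable V E" and col: "colourable V E k" and "finite C" "k < card C"
    and mixS: "mixing_above_chromatic (V - S) E" and colS: "colourable (V - S) E (k - 1)" "0 < k"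
    and "S \<subseteq> V" "finite S" and S: "independent_set S E"
    and \<alpha>: "proper_colouring V E C \<alpha>" and \<beta>: "proper_colouring V E C \<beta>"
    and agree: "\<forall>u. u \<notin> V \<longrightarrow> \<alpha> u = \<beta> u"
  shows "recolour_path V E C \<alpha> \<beta>"
proof -
  obtain \<alpha>' e where \<alpha>': "recolour_path V E C \<alpha> \<alpha>'" "e \<in> C" "e \<notin> \<alpha>' ` V"
    using colour_freeableE[OF free \<open>finite C\<close> col \<open>k < card C\<close> \<alpha>] by blast
  obtain \<beta>' e' where \<beta>': "recolour_path V E C \<beta> \<beta>'" "e' \<in> C" "e' \<notin> \<beta>' ` V"
    using colour_freeableE[OF free \<open>finite C\<close> col \<open>k < card C\<close> \<beta>] by blast
  have "k - 1 \<le> card (C - {e, e'})"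
    using card_Diff_doubleton_ge[OF \<open>finite C\<close>, of e e'] \<open>k < card C\<close> by linarith
  then obtain \<rho> where \<rho>: "proper_colouring (V - S) E (C - {e, e'}) \<rho>"
    using colourable_palette[OF colS(1)] \<open>finite C\<close> by blast
  then have \<rho>_e: "proper_colouring (V - S) E (C - {e}) \<rho>"
    and \<rho>_e': "proper_colouring (V - S) E (C - {e'}) \<rho>"
    by (auto elim: proper_colouring_mono)
  have "Suc (k - 1) < card C"
    using \<open>0 < k\<close> \<open>k < card C\<close> by linarith
  note split = recolour_to_split_colouring[OF mixS colS(1) \<open>finite C\<close> this \<open>S \<subseteq> V\<close> \<open>finite S\<close> S]
  define \<sigma> where "\<sigma> c = (\<lambda>u. if u \<in> S then c else if u \<in> V then \<rho> u else \<alpha> u)" for c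
  have "recolour_path V E C \<alpha>' (\<sigma> e)"
    unfolding \<sigma>_def using split[OF recolour_path_proper[OF \<alpha>'(1) \<alpha>] \<alpha>'(2,3) \<rho>_e]
      recolour_path_outside[OF \<alpha>'(1)] by simp
  moreover have "recolour_path V E C \<beta>' (\<sigma> e')"
    unfolding \<sigma>_def using split[OF recolour_path_proper[OF \<beta>'(1) \<beta>] \<beta>'(2,3) \<rho>_e']
      recolour_path_outside[OF \<beta>'(1)] agree by simp
  moreover have "recolour_path V E C (\<sigma> e) (\<sigma> e')"
  proof -
    have "proper_colouring V E C (\<sigma> e)"
      using recolour_path_proper \<alpha> \<alpha>' \<open>recolour_path V E C \<alpha>' (\<sigma> e)\<close> by (meson rtrancl_trans)
    moreover have "e' \<notin> \<sigma> e ` (V - S)"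
      using \<rho> unfolding \<sigma>_def proper_colouring_def by auto
    ultimately have "recolour_path V E C (\<sigma> e) (\<lambda>u. if u \<in> S then e' else \<sigma> e u)"
      using recolour_independent_set \<open>S \<subseteq> V\<close> \<open>finite S\<close> S \<open>e' \<in> C\<close> by blast
    also have "(\<lambda>u. if u \<in> S then e' else \<sigma> e u) = \<sigma> e'"
      unfolding \<sigma>_def by auto
    finally show ?thesis .
  qed
  ultimately show ?thesis
    using \<alpha>'(1) \<beta>'(1) recolour_path_sym by (meson rtrancl_trans)
qed

lemma mixing_above_chromatic_if_colour_freeable:
  assumes "finite V" and IH: "\<And>W. W \<subset> V \<Longrightarrow> mixing_above_chromatic W E"
    and free: "colour_freeable V E"
  shows "mixing_above_chromatic V E"
  unfolding mixing_above_chromatic_def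
proof (intro allI impI)
  fix C k \<alpha> \<beta>
  assume "finite C" and col: "colourable V E k" and "k < card C"
    and \<alpha>: "proper_colouring V E C \<alpha>" and \<beta>: "proper_colouring V E C \<beta>"
    and agree: "\<forall>u. u \<notin> V \<longrightarrow> \<alpha> u = \<beta> u"
  show "recolour_path V E C \<alpha> \<beta>"
  proof (cases "V = {}")
    case True
    then have "\<alpha> = \<beta>"
      using agree by (simp add: fun_eq_iff)
    then show ?thesis by simp
  next
    case False
    then obtain v where "v \<in> V" by blast
    obtain S where "v \<in> S" "S \<subseteq> V" and S: "independent_set S E"
      and colS: "colourable (V - S) E (k - 1)" "0 < k"
      by (rule colourable_remove_colour_class[OF col \<open>v \<in> V\<close>])
    have "V - S \<subset> V"
      using \<open>v \<in> S\<close> \<open>v \<in> V\<close> by blast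
    then have "mixing_above_chromatic (V - S) E"
      by (rule IH)
    moreover have "finite S"
      using \<open>S \<subseteq> V\<close> \<open>finite V\<close> by (rule finite_subset)
    ultimately show ?thesis
      using recolour_path_via_colour_class[OF free col \<open>finite C\<close> \<open>k < card C\<close> _ colS \<open>S \<subseteq> V\<close> _ S
          \<alpha> \<beta> agree]
      by blast
  qed
qed

section \<open>Freeing a colour\<close>

lemma recolour_part_inside_palette:
  assumes "A \<subseteq> V" and mixA: "mixing_above_chromatic A E" and "finite C'" "C' \<subseteq> C"
    and colA: "colourable A E k" "k < card C'"
    and \<alpha>: "proper_colouring V E C \<alpha>" "\<alpha> ` A \<subseteq> C'" and \<rho>: "proper_colouring A E C' \<rho>"
    and border: "\<forall>a\<in>A. \<forall>w\<in>V - A. {a, w} \<in> E \<longrightarrow> \<alpha> w \<notin> C'"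
  shows "recolour_path V E C \<alpha> (\<lambda>u. if u \<in> A then \<rho> u else \<alpha> u)"
proof (rule recolour_path_extend[OF _ \<open>A \<subseteq> V\<close> \<open>C' \<subseteq> C\<close> \<alpha>(1) border])
  show "recolour_path A E C' \<alpha> (\<lambda>u. if u \<in> A then \<rho> u else \<alpha> u)"
  proof (rule mixing_above_chromaticD[OF mixA \<open>finite C'\<close> colA])
    show "proper_colouring A E C' \<alpha>"
      using \<alpha> \<open>A \<subseteq> V\<close> unfolding proper_colouring_def by blast
    show "proper_colouring A E C' (\<lambda>u. if u \<in> A then \<rho> u else \<alpha> u)"
      using \<rho> unfolding proper_colouring_def by auto
  qed simp
qed

lemma free_colour_by_recolouring_part:
  assumes "A \<subseteq> V" and mixA: "mixing_above_chromatic A E" and \<alpha>: "proper_colouring V E C \<alpha>"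
    and "finite C" and colA: "colourable A E k" and "k < card (\<alpha> ` A)"
    and sep: "\<alpha> ` A \<inter> \<alpha> ` (V - A) = {}"
  shows "\<exists>\<beta> c. recolour_path V E C \<alpha> \<beta> \<and> c \<in> C \<and> c \<notin> \<beta> ` V"
proof -
  have "\<alpha> ` A \<subseteq> C"
    using proper_colouring_image[OF \<alpha> \<open>A \<subseteq> V\<close>] .
  then have "finite (\<alpha> ` A)"
    using \<open>finite C\<close> by (rule finite_subset)
  obtain C' where "C' \<subseteq> \<alpha> ` A" "card C' = k"
    using obtain_subset_with_card_n[of k "\<alpha> ` A"] \<open>k < card (\<alpha> ` A)\<close> by (metis less_imp_le)
  then have "finite C'"
    using \<open>finite (\<alpha> ` A)\<close> finite_subset by blast
  obtain \<rho> where \<rho>: "proper_colouring A E C' \<rho>"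
    using colourable_palette[OF colA \<open>finite C'\<close>] \<open>card C' = k\<close> by blast
  then have "proper_colouring A E (\<alpha> ` A) \<rho>"
    using \<open>C' \<subseteq> \<alpha> ` A\<close> by (rule proper_colouring_mono[OF _ order_refl])
  then have "recolour_path V E C \<alpha> (\<lambda>u. if u \<in> A then \<rho> u else \<alpha> u)"
    using recolour_part_inside_palette[OF \<open>A \<subseteq> V\<close> mixA \<open>finite (\<alpha> ` A)\<close> \<open>\<alpha> ` A \<subseteq> C\<close> colA
        \<open>k < card (\<alpha> ` A)\<close> \<alpha>]
      sep by blast
  moreover obtain c where "c \<in> \<alpha> ` A" "c \<notin> C'"
    using card_mono[OF \<open>finite C'\<close>, of "\<alpha> ` A"] \<open>card C' = k\<close> \<open>k < card (\<alpha> ` A)\<close> by auto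
  moreover have "(\<lambda>u. if u \<in> A then \<rho> u else \<alpha> u) ` V \<subseteq> C' \<union> \<alpha> ` (V - A)"
    using \<rho> unfolding proper_colouring_def by auto
  ultimately show ?thesis
    using sep \<open>\<alpha> ` A \<subseteq> C\<close> by blast
qed

lemma colour_freeable_disjoint_union:
  assumes V: "A \<union> B = V" "A \<inter> B = {}" and no_edges: "\<forall>a\<in>A. \<forall>b\<in>B. {a, b} \<notin> E"
    and mixA: "mixing_above_chromatic A E" and mixB: "mixing_above_chromatic B E"
  shows "colour_freeable V E"
proof (rule colour_freeableI)
  fix C k \<alpha>
  assume "finite C" and col: "colourable V E k" and "k < card C" and \<alpha>: "proper_colouring V E C \<alpha>"
  obtain C' where "C' \<subseteq> C" "card C' = k"
    using obtain_subset_with_card_n[of k C] \<open>k < card C\<close> by (metis less_imp_le)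
  then have "finite C'"
    using \<open>finite C\<close> finite_subset by blast
  have "A \<subseteq> V" "B \<subseteq> V" "V - A = B" "V - B = A"
    using V by blast+
  have colA: "colourable A E k" and colB: "colourable B E k"
    using colourable_mono[OF col] \<open>A \<subseteq> V\<close> \<open>B \<subseteq> V\<close> by blast+
  obtain \<rho>A \<rho>B where \<rho>A: "proper_colouring A E C' \<rho>A" and \<rho>B: "proper_colouring B E C' \<rho>B"
    using colourable_palette[OF colA \<open>finite C'\<close>] colourable_palette[OF colB \<open>finite C'\<close>] \<open>card C' = k\<close>
    by (metis order_refl)
  define \<alpha>' where "\<alpha>' = (\<lambda>u. if u \<in> A then \<rho>A u else \<alpha> u)"
  define \<alpha>'' where "\<alpha>'' = (\<lambda>u. if u \<in> B then \<rho>B u else \<alpha>' u)"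
  have first: "recolour_path V E C \<alpha> \<alpha>'"
    unfolding \<alpha>'_def
    using recolour_part_inside_palette[OF \<open>A \<subseteq> V\<close> mixA \<open>finite C\<close> order_refl colA \<open>k < card C\<close> \<alpha>
        proper_colouring_image[OF \<alpha> \<open>A \<subseteq> V\<close>] proper_colouring_mono[OF \<rho>A order_refl \<open>C' \<subseteq> C\<close>]]
      no_edges \<open>V - A = B\<close> by blast
  have \<alpha>': "proper_colouring V E C \<alpha>'"
    using recolour_path_proper[OF first \<alpha>] .
  have "\<forall>b\<in>B. \<forall>a\<in>A. {b, a} \<notin> E"
    using no_edges by (metis insert_commute)
  then have second: "recolour_path V E C \<alpha>' \<alpha>''"
    unfolding \<alpha>''_def
    using recolour_part_inside_palette[OF \<open>B \<subseteq> V\<close> mixB \<open>finite C\<close> order_refl colB \<open>k < card C\<close> \<alpha>'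
        proper_colouring_image[OF \<alpha>' \<open>B \<subseteq> V\<close>] proper_colouring_mono[OF \<rho>B order_refl \<open>C' \<subseteq> C\<close>]]
      \<open>V - B = A\<close> by blast
  obtain c where "c \<in> C" "c \<notin> C'"
    using card_mono[OF \<open>finite C'\<close>, of C] \<open>card C' = k\<close> \<open>k < card C\<close> by auto
  moreover have "\<alpha>'' ` V \<subseteq> C'"
    using \<rho>A \<rho>B V unfolding \<alpha>''_def \<alpha>'_def proper_colouring_def by auto
  ultimately show "\<exists>\<beta> c. recolour_path V E C \<alpha> \<beta> \<and> c \<in> C \<and> c \<notin> \<beta> ` V"
    using rtrancl_trans[OF first second] by blast
qed

lemma proper_colouring_join_disjoint:
  assumes "proper_colouring V E C f" "A \<union> B = V" and "\<forall>a\<in>A. \<forall>b\<in>B. {a, b} \<in> E"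
  shows "f ` A \<inter> f ` B = {}"
proof (rule ccontr)
  assume "f ` A \<inter> f ` B \<noteq> {}"
  then obtain a b where "a \<in> A" "b \<in> B" "f a = f b" by auto
  moreover have "{a, b} \<in> E" "a \<in> V" "b \<in> V"
    using assms(2,3) \<open>a \<in> A\<close> \<open>b \<in> B\<close> by auto
  ultimately show False
    using assms(1) unfolding proper_colouring_def by blast
qed

lemma colourable_card_image:
  assumes "proper_colouring V E C \<gamma>" "X \<subseteq> V" "finite (\<gamma> ` X)"
  shows "colourable X E (card (\<gamma> ` X))"
proof -
  have "proper_colouring X E (\<gamma> ` X) \<gamma>"
    using assms(1,2) unfolding proper_colouring_def by blast
  then show ?thesis
    using assms(3) unfolding colourable_def by blast
qed

lemma colour_freeable_join:
  assumes V: "A \<union> B = V" "A \<inter> B = {}" and all_edges: "\<forall>a\<in>A. \<forall>b\<in>B. {a, b} \<in> E"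
    and mixA: "mixing_above_chromatic A E" and mixB: "mixing_above_chromatic B E"
  shows "colour_freeable V E"
proof (rule colour_freeableI)
  fix C k \<alpha>
  assume "finite C" and col: "colourable V E k" and "k < card C" and \<alpha>: "proper_colouring V E C \<alpha>"
  show "\<exists>\<beta> c. recolour_path V E C \<alpha> \<beta> \<and> c \<in> C \<and> c \<notin> \<beta> ` V"
  proof (cases "C \<subseteq> \<alpha> ` V")
    case False
    then show ?thesis by blast
  next
    case True
    note sep = proper_colouring_join_disjoint[OF _ \<open>A \<union> B = V\<close> all_edges]
    obtain C0 \<gamma> where "finite C0" "card C0 \<le> k" and \<gamma>: "proper_colouring V E C0 \<gamma>"
      using col unfolding colourable_def by blast
    have "\<gamma> ` A \<union> \<gamma> ` B \<subseteq> C0"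
      using \<gamma> V unfolding proper_colouring_def by blast
    then have fin\<gamma>: "finite (\<gamma> ` A)" "finite (\<gamma> ` B)"
      using \<open>finite C0\<close> finite_subset by auto
    have "card (\<gamma> ` A) + card (\<gamma> ` B) \<le> k"
      using card_Un_disjoint[OF fin\<gamma> sep[OF \<gamma>]] card_mono[OF \<open>finite C0\<close> \<open>\<gamma> ` A \<union> \<gamma> ` B \<subseteq> C0\<close>]
        \<open>card C0 \<le> k\<close> by linarith
    moreover have "\<alpha> ` A \<union> \<alpha> ` B = C"
      using True \<alpha> V unfolding proper_colouring_def by blast
    then have "card (\<alpha> ` A) + card (\<alpha> ` B) = card C"
      using card_Un_disjoint[OF _ _ sep[OF \<alpha>]] \<open>finite C\<close> by (metis finite_Un)
    ultimately have "card (\<gamma> ` A) < card (\<alpha> ` A) \<or> card (\<gamma> ` B) < card (\<alpha> ` B)"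
      using \<open>k < card C\<close> by linarith
    moreover have "A \<subseteq> V" "B \<subseteq> V" "V - A = B" "V - B = A"
      using V by blast+
    ultimately show ?thesis
      using free_colour_by_recolouring_part[OF _ mixA \<alpha> \<open>finite C\<close> colourable_card_image[OF \<gamma>]]
        free_colour_by_recolouring_part[OF _ mixB \<alpha> \<open>finite C\<close> colourable_card_image[OF \<gamma>]]
        sep[OF \<alpha>] fin\<gamma> by (auto simp: Int_commute)
  qed
qed

definition no_independent_triple :: "'a set \<Rightarrow> 'a set set \<Rightarrow> bool" where
  "no_independent_triple V E \<longleftrightarrow> (\<forall>x\<in>V. \<forall>y\<in>V. \<forall>z\<in>V.
     x \<noteq> y \<and> y \<noteq> z \<and> x \<noteq> z \<longrightarrow> {x, y} \<in> E \<or> {y, z} \<in> E \<or> {x, z} \<in> E)"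

definition singleton_fibre_points :: "'a set \<Rightarrow> ('a \<Rightarrow> 'b) \<Rightarrow> 'a set" where
  "singleton_fibre_points V f = {x \<in> V. \<forall>y\<in>V. f y = f x \<longrightarrow> y = x}"

lemma card_fibre_singleton_fibre_points:
  assumes "c \<in> f ` V"
    and fibres: "\<And>x y z. x \<in> V \<Longrightarrow> y \<in> V \<Longrightarrow> z \<in> V \<Longrightarrow> f x = f y \<Longrightarrow> f y = f z \<Longrightarrow>
      x = y \<or> y = z \<or> x = z"
  shows "card {x \<in> V. f x = c} + card ({x \<in> V. f x = c} \<inter> singleton_fibre_points V f) = 2"
proof -
  obtain x where "x \<in> V" "c = f x"
    using assms(1) by blast
  show ?thesis
  proof (cases "x \<in> singleton_fibre_points V f")
    case True
    then have "{x \<in> V. f x = c} = {x}"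
      using \<open>x \<in> V\<close> \<open>c = f x\<close> unfolding singleton_fibre_points_def by blast
    then show ?thesis
      using True by simp
  next
    case False
    then obtain y where "y \<in> V" "f y = f x" "y \<noteq> x"
      using \<open>x \<in> V\<close> unfolding singleton_fibre_points_def by blast
    then have "{x \<in> V. f x = c} = {x, y}"
      using fibres[of x y] \<open>x \<in> V\<close> \<open>c = f x\<close> by fastforce
    moreover have "x \<notin> singleton_fibre_points V f" "y \<notin> singleton_fibre_points V f"
      using \<open>x \<in> V\<close> \<open>y \<in> V\<close> \<open>f y = f x\<close> \<open>y \<noteq> x\<close> unfolding singleton_fibre_points_def by auto
    ultimately show ?thesis
      using \<open>y \<noteq> x\<close> by simp
  qed
qed

lemma card_singleton_fibre_points:
  assumes "finite V"
    and fibres: "\<And>x y z. x \<in> V \<Longrightarrow> y \<in> V \<Longrightarrow> z \<in> V \<Longrightarrow> f x = f y \<Longrightarrow> f y = f z \<Longrightarrow>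
      x = y \<or> y = z \<or> x = z"
  shows "card V + card (singleton_fibre_points V f) = 2 * card (f ` V)"
proof -
  define fib where "fib c = {x \<in> V. f x = c}" for c
  have sum: "card (\<Union>c\<in>f ` V. F c) = (\<Sum>c\<in>f ` V. card (F c))"
    if "\<And>c. F c \<subseteq> fib c" for F :: "'b \<Rightarrow> 'a set"
  proof (rule card_UN_disjoint)
    show "finite (f ` V)" "\<forall>c\<in>f ` V. finite (F c)"
      using \<open>finite V\<close> finite_subset[OF that] unfolding fib_def by auto
    show "\<forall>c\<in>f ` V. \<forall>d\<in>f ` V. c \<noteq> d \<longrightarrow> F c \<inter> F d = {}"
    proof (intro ballI impI)
      fix c d :: 'b assume "c \<noteq> d"
      then show "F c \<inter> F d = {}"
        using that[of c] that[of d] unfolding fib_def by blast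
    qed
  qed
  have "V = (\<Union>c\<in>f ` V. fib c)"
    "singleton_fibre_points V f = (\<Union>c\<in>f ` V. fib c \<inter> singleton_fibre_points V f)"
    unfolding fib_def singleton_fibre_points_def by blast+
  then have "card V + card (singleton_fibre_points V f) =
      (\<Sum>c\<in>f ` V. card (fib c) + card (fib c \<inter> singleton_fibre_points V f))"
    using sum[of fib] sum[of "\<lambda>c. fib c \<inter> singleton_fibre_points V f"] by (simp add: sum.distrib)
  also have "\<dots> = (\<Sum>c\<in>f ` V. 2)"
  proof (rule sum.cong[OF refl])
    fix c assume "c \<in> f ` V"
    then show "card (fib c) + card (fib c \<inter> singleton_fibre_points V f) = 2"
      unfolding fib_def by (rule card_fibre_singleton_fibre_points[OF _ fibres])
  qed
  finally show ?thesis
    by simp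
qed

lemma colour_class_card_le_two:
  assumes "no_independent_triple V E" "proper_colouring V E C f"
    "x \<in> V" "y \<in> V" "z \<in> V" "f x = f y" "f y = f z"
  shows "x = y \<or> y = z \<or> x = z"
  using assms unfolding no_independent_triple_def proper_colouring_def by metis

definition agreeing_pairs :: "'a set \<Rightarrow> ('a \<Rightarrow> nat) \<Rightarrow> ('a \<Rightarrow> nat) \<Rightarrow> ('a \<times> 'a) set" where
  "agreeing_pairs V \<gamma> \<beta> = {(x, y). x \<in> V \<and> y \<in> V \<and> x \<noteq> y \<and> \<beta> x = \<beta> y \<and> \<gamma> x = \<gamma> y}"

text \<open>Colour classes have at most two vertices, so \<open>|V| + #singleton classes = 2 \<cdot> #colours\<close>.
  Hence \<open>\<beta>\<close> has a singleton class \<open>{x}\<close> although \<open>x\<close> shares its \<open>\<gamma>\<close>-colour with some \<open>y\<close>.\<close>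
lemma alone_vertex_with_twin:
  assumes "finite V" and triple: "no_independent_triple V E"
    and \<gamma>: "proper_colouring V E C0 \<gamma>" and \<beta>: "proper_colouring V E C \<beta>"
    and more_colours: "card (\<gamma> ` V) < card (\<beta> ` V)"
  obtains x y where "x \<in> V" "\<forall>z\<in>V. \<beta> z = \<beta> x \<longrightarrow> z = x" "y \<in> V" "y \<noteq> x" "\<gamma> y = \<gamma> x"
proof -
  have count: "card V + card (singleton_fibre_points V f) = 2 * card (f ` V)"
    if "proper_colouring V E C' f" for f C'
    using card_singleton_fibre_points[OF \<open>finite V\<close>] colour_class_card_le_two[OF triple that]
    by blast
  have "\<not> singleton_fibre_points V \<beta> \<subseteq> singleton_fibre_points V \<gamma>"
  proof
    assume "singleton_fibre_points V \<beta> \<subseteq> singleton_fibre_points V \<gamma>"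
    then have "card (singleton_fibre_points V \<beta>) \<le> card (singleton_fibre_points V \<gamma>)"
      using \<open>finite V\<close> by (intro card_mono) (auto simp: singleton_fibre_points_def)
    then show False
      using count[OF \<beta>] count[OF \<gamma>] more_colours by linarith
  qed
  then show thesis
    using that unfolding singleton_fibre_points_def by blast
qed

lemma proper_colouring_join_singleton_class:
  assumes \<beta>: "proper_colouring V E C \<beta>" and "x \<in> V" and alone: "\<forall>z\<in>V. \<beta> z = \<beta> x \<longrightarrow> z = x"
    and "{x, y} \<notin> E"
  shows "proper_colouring V E C (\<beta>(y := \<beta> x))"
  unfolding proper_colouring_def
proof (intro conjI ballI impI)
  show "\<beta>(y := \<beta> x) ` V \<subseteq> C"
    using \<beta> \<open>x \<in> V\<close> unfolding proper_colouring_def by auto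
  have nbr: "\<beta> w \<noteq> \<beta> x" if "w \<in> V" "{w, y} \<in> E" for w
    using alone that \<open>{x, y} \<notin> E\<close> by (metis insert_commute)
  fix u v assume "u \<in> V" "v \<in> V" "{u, v} \<in> E"
  moreover have "\<beta> u \<noteq> \<beta> v"
    using \<beta> \<open>u \<in> V\<close> \<open>v \<in> V\<close> \<open>{u, v} \<in> E\<close> unfolding proper_colouring_def by blast
  ultimately show "(\<beta>(y := \<beta> x)) u \<noteq> (\<beta>(y := \<beta> x)) v"
    using nbr[of u] nbr[of v] by (cases "u = y"; cases "v = y") (auto simp: insert_commute)
qed

text \<open>Giving \<open>y\<close> the colour of its twin \<open>x\<close> makes \<open>\<beta>\<close> agree with \<open>\<gamma>\<close> on one more pair.\<close>
lemma recolour_step_increasing_agreement: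
  assumes "finite V" and triple: "no_independent_triple V E"
    and \<gamma>: "proper_colouring V E C0 \<gamma>" and \<beta>: "proper_colouring V E C \<beta>"
    and more_colours: "card (\<gamma> ` V) < card (\<beta> ` V)"
  obtains \<beta>' where "(\<beta>, \<beta>') \<in> recolour_step V E C" "agreeing_pairs V \<gamma> \<beta> \<subset> agreeing_pairs V \<gamma> \<beta>'"
proof -
  obtain x y where "x \<in> V" and x_alone: "\<forall>z\<in>V. \<beta> z = \<beta> x \<longrightarrow> z = x"
    and "y \<in> V" "y \<noteq> x" "\<gamma> y = \<gamma> x"
    using alone_vertex_with_twin[OF assms] .
  define \<beta>' where "\<beta>' = \<beta>(y := \<beta> x)"
  have "{x, y} \<notin> E"
    using \<gamma> \<open>x \<in> V\<close> \<open>y \<in> V\<close> \<open>\<gamma> y = \<gamma> x\<close> unfolding proper_colouring_def by metis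
  then have "proper_colouring V E C \<beta>'"
    unfolding \<beta>'_def by (rule proper_colouring_join_singleton_class[OF \<beta> \<open>x \<in> V\<close> x_alone])
  then have "(\<beta>, \<beta>') \<in> recolour_step V E C"
    using \<beta> \<open>y \<in> V\<close> unfolding recolour_step_def \<beta>'_def by auto
  moreover have "agreeing_pairs V \<gamma> \<beta> \<subset> agreeing_pairs V \<gamma> \<beta>'"
  proof
    have "p \<noteq> y" if "p \<in> V" "q \<in> V" "p \<noteq> q" "\<beta> p = \<beta> q" "\<gamma> p = \<gamma> q" for p q
    proof
      assume "p = y"
      then have "q = x"
        using colour_class_card_le_two[OF triple \<gamma> \<open>x \<in> V\<close> \<open>y \<in> V\<close> \<open>q \<in> V\<close>] \<open>\<gamma> y = \<gamma> x\<close>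
          \<open>y \<noteq> x\<close> that by auto
      then show False
        using x_alone \<open>y \<in> V\<close> \<open>y \<noteq> x\<close> \<open>p = y\<close> that(4) by blast
    qed
    then show "agreeing_pairs V \<gamma> \<beta> \<subseteq> agreeing_pairs V \<gamma> \<beta>'"
      unfolding agreeing_pairs_def \<beta>'_def by fastforce
    have "(x, y) \<in> agreeing_pairs V \<gamma> \<beta>' - agreeing_pairs V \<gamma> \<beta>"
      using \<open>x \<in> V\<close> \<open>y \<in> V\<close> \<open>y \<noteq> x\<close> \<open>\<gamma> y = \<gamma> x\<close> x_alone
      unfolding agreeing_pairs_def \<beta>'_def by auto
    then show "agreeing_pairs V \<gamma> \<beta> \<noteq> agreeing_pairs V \<gamma> \<beta>'"
      by blast
  qed
  ultimately show thesis
    by (rule that)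
qed

lemma card_diff_psubset_less:
  assumes "finite X" "A \<subset> B" "B \<subseteq> X"
  shows "card X - card B < card X - card A"
proof -
  have "card A < card B"
    using assms finite_subset psubset_card_mono by metis
  moreover have "card B \<le> card X"
    using assms card_mono by metis
  ultimately show ?thesis
    by linarith
qed

lemma colour_freeable_if_no_independent_triple:
  assumes "finite V" and triple: "no_independent_triple V E"
  shows "colour_freeable V E"
proof (rule colour_freeableI)
  fix C k \<alpha>
  assume "finite C" and col: "colourable V E k" and "k < card C" and \<alpha>: "proper_colouring V E C \<alpha>"
  obtain C0 \<gamma> where "finite C0" "card C0 \<le> k" and \<gamma>: "proper_colouring V E C0 \<gamma>"
    using col unfolding colourable_def by blast
  then have "card (\<gamma> ` V) < card C"
    using card_mono[of C0 "\<gamma> ` V"] \<open>k < card C\<close> unfolding proper_colouring_def by fastforce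
  have pairs: "agreeing_pairs V \<gamma> \<beta> \<subseteq> V \<times> V" for \<beta>
    unfolding agreeing_pairs_def by auto
  have "\<exists>\<beta>' c. recolour_path V E C \<alpha> \<beta>' \<and> c \<in> C \<and> c \<notin> \<beta>' ` V"
    if "recolour_path V E C \<alpha> \<beta>" for \<beta>
    using that
  proof (induction "card (V \<times> V) - card (agreeing_pairs V \<gamma> \<beta>)" arbitrary: \<beta> rule: less_induct)
    case less
    have \<beta>: "proper_colouring V E C \<beta>"
      using recolour_path_proper[OF less.prems \<alpha>] .
    show ?case
    proof (cases "C \<subseteq> \<beta> ` V")
      case False
      then show ?thesis
        using less.prems by blast
    next
      case True
      then have "card (\<gamma> ` V) < card (\<beta> ` V)"
        using \<beta> \<open>card (\<gamma> ` V) < card C\<close> unfolding proper_colouring_def by (metis subset_antisym)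
      then obtain \<beta>' where step: "(\<beta>, \<beta>') \<in> recolour_step V E C"
        and grow: "agreeing_pairs V \<gamma> \<beta> \<subset> agreeing_pairs V \<gamma> \<beta>'"
        using recolour_step_increasing_agreement[OF \<open>finite V\<close> triple \<gamma> \<beta>] by blast
      have "card (V \<times> V) - card (agreeing_pairs V \<gamma> \<beta>') < card (V \<times> V) - card (agreeing_pairs V \<gamma> \<beta>)"
        using card_diff_psubset_less[OF _ grow pairs] \<open>finite V\<close> by simp
      moreover have "recolour_path V E C \<alpha> \<beta>'"
        using less.prems step by (rule rtrancl_into_rtrancl)
      ultimately show ?thesis
        by (rule less.hyps)
    qed
  qed
  then show "\<exists>\<beta> c. recolour_path V E C \<alpha> \<beta> \<and> c \<in> C \<and> c \<notin> \<beta> ` V"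
    by blast
qed

section \<open>Decomposable graphs\<close>

definition decomposable :: "'a set \<Rightarrow> 'a set set \<Rightarrow> bool" where
  "decomposable V E \<longleftrightarrow> (\<exists>A B. A \<union> B = V \<and> A \<inter> B = {} \<and> A \<noteq> {} \<and> B \<noteq> {} \<and>
     ((\<forall>a\<in>A. \<forall>b\<in>B. {a, b} \<notin> E) \<or> (\<forall>a\<in>A. \<forall>b\<in>B. {a, b} \<in> E)))"

lemma decomposableI:
  assumes "A \<union> B = V" "A \<inter> B = {}" "A \<noteq> {}" "B \<noteq> {}"
    and "(\<forall>a\<in>A. \<forall>b\<in>B. {a, b} \<notin> E) \<or> (\<forall>a\<in>A. \<forall>b\<in>B. {a, b} \<in> E)"
  shows "decomposable V E"
  using assms unfolding decomposable_def by blast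

lemma mixing_above_chromatic_hereditary_class:
  assumes "finite V" "Q V" and hereditary: "\<And>W W'. Q W \<Longrightarrow> W' \<subseteq> W \<Longrightarrow> Q W'"
    and splits: "\<And>W. Q W \<Longrightarrow> finite W \<Longrightarrow> no_independent_triple W E \<or> decomposable W E"
  shows "mixing_above_chromatic V E"
  using assms(1,2)
proof (induction V rule: finite_psubset_induct)
  case (psubset V)
  have IH: "mixing_above_chromatic W E" if "W \<subset> V" for W
  proof (rule psubset.IH[OF that])
    show "Q W"
      using hereditary[OF psubset.prems] that by blast
  qed
  have "colour_freeable V E"
  proof (cases "no_independent_triple V E")
    case True
    then show ?thesis
      by (rule colour_freeable_if_no_independent_triple[OF psubset.hyps])
  next
    case False
    then have "decomposable V E"
      using splits[OF psubset.prems psubset.hyps] by blast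
    then obtain A B where "A \<union> B = V" "A \<inter> B = {}" "A \<noteq> {}" "B \<noteq> {}"
      and edges: "(\<forall>a\<in>A. \<forall>b\<in>B. {a, b} \<notin> E) \<or> (\<forall>a\<in>A. \<forall>b\<in>B. {a, b} \<in> E)"
      unfolding decomposable_def by blast
    then have "A \<subset> V" "B \<subset> V"
      by blast+
    then have "mixing_above_chromatic A E" "mixing_above_chromatic B E"
      by (simp_all add: IH)
    then show ?thesis
      using edges colour_freeable_disjoint_union[OF \<open>A \<union> B = V\<close> \<open>A \<inter> B = {}\<close>]
        colour_freeable_join[OF \<open>A \<union> B = V\<close> \<open>A \<inter> B = {}\<close>] by blast
  qed
  with psubset.hyps IH show ?case
    by (rule mixing_above_chromatic_if_colour_freeable)
qed

section \<open>\<open>P\<^sub>4\<close>-free graphs\<close>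

definition P4_free :: "'a set \<Rightarrow> 'a set set \<Rightarrow> bool" where
  "P4_free V E \<longleftrightarrow> \<not> (\<exists>a\<in>V. \<exists>b\<in>V. \<exists>c\<in>V. \<exists>d\<in>V. {a, b} \<in> E \<and> {b, c} \<in> E \<and> {c, d} \<in> E \<and>
     {a, c} \<notin> E \<and> {a, d} \<notin> E \<and> {b, d} \<notin> E)"

definition complement_edges :: "'a set set \<Rightarrow> 'a set set" where
  "complement_edges E = {{u, v} | u v. u \<noteq> v \<and> {u, v} \<notin> E}"

lemma P4_free_subset: "P4_free V E \<Longrightarrow> W \<subseteq> V \<Longrightarrow> P4_free W E"
  unfolding P4_free_def by blast

lemma complement_edges_iff: "u \<noteq> v \<Longrightarrow> {u, v} \<in> complement_edges E \<longleftrightarrow> {u, v} \<notin> E"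
  unfolding complement_edges_def by (auto simp: doubleton_eq_iff insert_commute)

lemma loop_notin_complement_edges: "{u, u} \<notin> complement_edges E"
  unfolding complement_edges_def by (auto simp: doubleton_eq_iff)

lemma decomposable_complement_edges:
  assumes "decomposable V (complement_edges E)"
  shows "decomposable V E"
proof -
  obtain A B where AB: "A \<union> B = V" "A \<inter> B = {}" "A \<noteq> {}" "B \<noteq> {}"
    and "(\<forall>a\<in>A. \<forall>b\<in>B. {a, b} \<notin> complement_edges E) \<or> (\<forall>a\<in>A. \<forall>b\<in>B. {a, b} \<in> complement_edges E)"
    using assms unfolding decomposable_def by blast
  moreover have "{a, b} \<in> complement_edges E \<longleftrightarrow> {a, b} \<notin> E" if "a \<in> A" "b \<in> B" for a b
    using that \<open>A \<inter> B = {}\<close> complement_edges_iff[of a b E] by blast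
  ultimately have "(\<forall>a\<in>A. \<forall>b\<in>B. {a, b} \<in> E) \<or> (\<forall>a\<in>A. \<forall>b\<in>B. {a, b} \<notin> E)"
    by auto
  then show ?thesis
    using AB unfolding decomposable_def by blast
qed

text \<open>\<open>P\<^sub>4\<close> is self-complementary: the complement of the path \<open>a b c d\<close> is the path \<open>c a d b\<close>.\<close>
lemma P4_free_complement_edges:
  assumes "P4_free V E"
  shows "P4_free V (complement_edges E)"
  unfolding P4_free_def
proof clarify
  fix a b c d
  assume "a \<in> V" "b \<in> V" "c \<in> V" "d \<in> V"
    and path: "{a, b} \<in> complement_edges E" "{b, c} \<in> complement_edges E" "{c, d} \<in> complement_edges E"
    and chords: "{a, c} \<notin> complement_edges E" "{a, d} \<notin> complement_edges E" "{b, d} \<notin> complement_edges E"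
  have "a \<noteq> c" "b \<noteq> d" "a \<noteq> d"
    using path chords by (metis insert_commute)+
  moreover have "a \<noteq> b" "b \<noteq> c" "c \<noteq> d"
    using path loop_notin_complement_edges by metis+
  ultimately have "{c, a} \<in> E" "{a, d} \<in> E" "{d, b} \<in> E" "{c, d} \<notin> E" "{c, b} \<notin> E" "{a, b} \<notin> E"
    using path chords by (simp_all add: complement_edges_iff insert_commute)
  then show False
    using assms(1) \<open>a \<in> V\<close> \<open>b \<in> V\<close> \<open>c \<in> V\<close> \<open>d \<in> V\<close> unfolding P4_free_def by blast
qed

text \<open>The non-neighbours of \<open>v\<close> in \<open>A\<close> split off: an edge from one of them, \<open>y'\<close>, to a neighbour \<open>x\<close>
  of \<open>v\<close> would give the induced path \<open>y' x v b\<close>.\<close>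
lemma decomposable_insert_P4_free_with_neighbour:
  assumes P4: "P4_free (insert v W) E" and "v \<notin> W"
    and W: "A \<union> B = W" "A \<inter> B = {}" and no_edges: "\<forall>a\<in>A. \<forall>b\<in>B. {a, b} \<notin> E"
    and "b \<in> B" "{v, b} \<in> E" and "y \<in> A" "{v, y} \<notin> E"
  shows "decomposable (insert v W) E"
proof -
  define A' where "A' = {u \<in> A. {v, u} \<notin> E}"
  have closed: "{v, x} \<notin> E" if "x \<in> A" "y' \<in> A" "{v, y'} \<notin> E" "{x, y'} \<in> E" for x y'
  proof
    assume "{v, x} \<in> E"
    then have "{y', x} \<in> E" "{x, v} \<in> E" "{y', v} \<notin> E"
      using that by (simp_all add: insert_commute)
    moreover have "{y', b} \<notin> E" "{x, b} \<notin> E"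
      using no_edges that \<open>b \<in> B\<close> by auto
    moreover have "y' \<in> insert v W" "x \<in> insert v W" "v \<in> insert v W" "b \<in> insert v W"
      using that \<open>b \<in> B\<close> W by auto
    ultimately show False
      using P4 \<open>{v, b} \<in> E\<close> unfolding P4_free_def by blast
  qed
  show ?thesis
  proof (rule decomposableI[of A' "insert v W - A'"])
    show "A' \<union> (insert v W - A') = insert v W" "A' \<inter> (insert v W - A') = {}"
      using W unfolding A'_def by auto
    show "A' \<noteq> {}" "insert v W - A' \<noteq> {}"
      using \<open>y \<in> A\<close> \<open>{v, y} \<notin> E\<close> \<open>v \<notin> W\<close> W unfolding A'_def by auto
    have "{a, u} \<notin> E" if "a \<in> A'" "u \<in> insert v W - A'" for a u
      using that closed[of u a] no_edges W unfolding A'_def by (auto simp: insert_commute)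
    then show "(\<forall>a\<in>A'. \<forall>u\<in>insert v W - A'. {a, u} \<notin> E) \<or>
        (\<forall>a\<in>A'. \<forall>u\<in>insert v W - A'. {a, u} \<in> E)"
      by blast
  qed
qed

lemma decomposable_insert_P4_free:
  assumes P4: "P4_free (insert v W) E" and "v \<notin> W"
    and W: "A \<union> B = W" "A \<inter> B = {}" "A \<noteq> {}" "B \<noteq> {}"
    and no_edges: "\<forall>a\<in>A. \<forall>b\<in>B. {a, b} \<notin> E"
  shows "decomposable (insert v W) E"
proof -
  have no_edges': "\<forall>b\<in>B. \<forall>a\<in>A. {b, a} \<notin> E"
    using no_edges by (metis insert_commute)
  consider "\<forall>a\<in>A. {v, a} \<notin> E" | "\<forall>b\<in>B. {v, b} \<notin> E" | "\<forall>u\<in>W. {v, u} \<in> E"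
    | a b y where "a \<in> A" "{v, a} \<in> E" "b \<in> B" "{v, b} \<in> E" "y \<in> W" "{v, y} \<notin> E"
    by blast
  then show ?thesis
  proof cases
    case 1
    show ?thesis
      by (rule decomposableI[of A "insert v B"])
        (use 1 W no_edges \<open>v \<notin> W\<close> in \<open>auto simp: insert_commute\<close>)
  next
    case 2
    show ?thesis
      by (rule decomposableI[of "insert v A" B]) (use 2 W no_edges \<open>v \<notin> W\<close> in auto)
  next
    case 3
    show ?thesis
      by (rule decomposableI[of "{v}" W]) (use 3 W \<open>v \<notin> W\<close> in auto)
  next
    case 4
    show ?thesis
    proof (cases "y \<in> A")
      case True
      then show ?thesis
        using decomposable_insert_P4_free_with_neighbour[OF P4 \<open>v \<notin> W\<close> W(1,2) no_edges] 4 by blast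
    next
      case False
      then have "y \<in> B" "B \<union> A = W" "B \<inter> A = {}"
        using 4 W by auto
      then show ?thesis
        using decomposable_insert_P4_free_with_neighbour[OF P4 \<open>v \<notin> W\<close> _ _ no_edges'] 4 by blast
    qed
  qed
qed

lemma decomposable_if_P4_free:
  assumes "finite V" "P4_free V E" "2 \<le> card V"
  shows "decomposable V E"
  using assms
proof (induction V rule: finite_induct)
  case (insert v W)
  show ?case
  proof (cases "2 \<le> card W")
    case True
    then have "decomposable W E"
      using insert P4_free_subset[OF insert.prems(1)] by blast
    then obtain A B where W: "A \<union> B = W" "A \<inter> B = {}" "A \<noteq> {}" "B \<noteq> {}"
      and "(\<forall>a\<in>A. \<forall>b\<in>B. {a, b} \<notin> E) \<or> (\<forall>a\<in>A. \<forall>b\<in>B. {a, b} \<in> E)"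
      unfolding decomposable_def by blast
    moreover have "{a, b} \<notin> complement_edges E" if "a \<in> A" "b \<in> B" "{a, b} \<in> E" for a b
      using complement_edges_iff[of a b E] that W(2) by blast
    ultimately consider "\<forall>a\<in>A. \<forall>b\<in>B. {a, b} \<notin> E" | "\<forall>a\<in>A. \<forall>b\<in>B. {a, b} \<notin> complement_edges E"
      by blast
    then show ?thesis
    proof cases
      case 1
      then show ?thesis
        using decomposable_insert_P4_free[OF insert.prems(1) insert.hyps(2) W] by blast
    next
      case 2
      \<comment> \<open>A join in \<open>E\<close> is a disjoint union in the complement.\<close>
      then show ?thesis
        using decomposable_insert_P4_free[OF P4_free_complement_edges[OF insert.prems(1)]
            insert.hyps(2) W]
          decomposable_complement_edges by blast
    qed
  next
    case False
    then have "card W = 1"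
      using insert by simp
    then obtain w where "W = {w}"
      by (rule card_1_singletonE)
    then show ?thesis
      using insert.hyps(2) decomposableI[of "{v}" "{w}" "insert v W" E] by auto
  qed
qed simp

lemma no_independent_triple_if_card_le_2:
  assumes "finite V" "card V \<le> 2"
  shows "no_independent_triple V E"
  unfolding no_independent_triple_def
proof (intro ballI impI)
  fix x y z assume "x \<in> V" "y \<in> V" "z \<in> V" "x \<noteq> y \<and> y \<noteq> z \<and> x \<noteq> z"
  then have "card {x, y, z} \<le> card V" "card {x, y, z} = 3"
    using card_mono[OF \<open>finite V\<close>, of "{x, y, z}"] by auto
  then show "{x, y} \<in> E \<or> {y, z} \<in> E \<or> {x, z} \<in> E"
    using \<open>card V \<le> 2\<close> by linarith
qed

lemma mixing_above_chromatic_if_P4_free: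
  assumes "finite V" "P4_free V E"
  shows "mixing_above_chromatic V E"
proof (rule mixing_above_chromatic_hereditary_class[where Q = "\<lambda>W. P4_free W E"])
  fix W assume "P4_free W E" "finite W"
  then show "no_independent_triple W E \<or> decomposable W E"
    using decomposable_if_P4_free no_independent_triple_if_card_le_2 by (meson nat_le_linear)
qed (use assms P4_free_subset in auto)

section \<open>\<open>(P\<^sub>3 + P\<^sub>1)\<close>-free graphs\<close>

definition P3P1_free :: "'a set \<Rightarrow> 'a set set \<Rightarrow> bool" where
  "P3P1_free V E \<longleftrightarrow> \<not> (\<exists>a\<in>V. \<exists>b\<in>V. \<exists>c\<in>V. \<exists>d\<in>V. a \<noteq> c \<and> {a, b} \<in> E \<and> {b, c} \<in> E \<and>
     {a, c} \<notin> E \<and> {d, a} \<notin> E \<and> {d, b} \<notin> E \<and> {d, c} \<notin> E)"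

definition P3_free :: "'a set \<Rightarrow> 'a set set \<Rightarrow> bool" where
  "P3_free K E \<longleftrightarrow> (\<forall>x\<in>K. \<forall>y\<in>K. \<forall>z\<in>K. x \<noteq> z \<and> {x, y} \<in> E \<and> {y, z} \<in> E \<longrightarrow> {x, z} \<in> E)"

lemma P3P1_free_subset: "P3P1_free V E \<Longrightarrow> W \<subseteq> V \<Longrightarrow> P3P1_free W E"
  unfolding P3P1_free_def by blast

lemma P3_freeD:
  "P3_free K E \<Longrightarrow> x \<in> K \<Longrightarrow> y \<in> K \<Longrightarrow> z \<in> K \<Longrightarrow> x \<noteq> z \<Longrightarrow> {x, y} \<in> E \<Longrightarrow> {y, z} \<in> E \<Longrightarrow> {x, z} \<in> E"
  unfolding P3_free_def by blast

lemma P3P1_freeD: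
  "P3P1_free V E \<Longrightarrow> a \<in> V \<Longrightarrow> b \<in> V \<Longrightarrow> c \<in> V \<Longrightarrow> d \<in> V \<Longrightarrow> a \<noteq> c \<Longrightarrow> {a, b} \<in> E \<Longrightarrow> {b, c} \<in> E \<Longrightarrow>
    {a, c} \<notin> E \<Longrightarrow> {d, a} \<notin> E \<Longrightarrow> {d, b} \<notin> E \<Longrightarrow> {d, c} \<notin> E \<Longrightarrow> False"
  unfolding P3P1_free_def by blast

lemma decomposable_if_P3_free:
  assumes P3: "P3_free V E" and "x \<in> V" "y \<in> V" "x \<noteq> y" "{x, y} \<notin> E"
  shows "decomposable V E"
proof -
  define A where "A = {u \<in> V. u = x \<or> {x, u} \<in> E}"
  have "{a, b} \<notin> E" if "a \<in> A" "b \<in> V - A" for a b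
  proof
    assume "{a, b} \<in> E"
    moreover have "b \<noteq> x" "{x, b} \<notin> E"
      using \<open>b \<in> V - A\<close> unfolding A_def by auto
    ultimately show False
      using P3_freeD[OF P3 \<open>x \<in> V\<close>, of a b] that unfolding A_def by auto
  qed
  moreover have "x \<in> A" "y \<in> V - A"
    using assms(2-5) unfolding A_def by auto
  moreover have "A \<subseteq> V"
    unfolding A_def by blast
  ultimately show ?thesis
    by (intro decomposableI[of A "V - A"]) auto
qed

text \<open>A \<open>P\<^sub>3\<close>-free set \<open>K\<close> induces a disjoint union of cliques. If \<open>w\<close> saw only part of the clique of
  \<open>y\<close>, it would see every vertex of \<open>K\<close> outside that clique, and two non-adjacent such vertices
  (from the independent triple) would form a \<open>P\<^sub>3 + P\<^sub>1\<close> with \<open>w\<close> and \<open>z\<close>.\<close>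
lemma P3P1_free_adjacent_to_clique:
  assumes P31: "P3P1_free V E" and "K \<subseteq> V" and P3: "P3_free K E"
    and triple: "\<not> no_independent_triple K E"
    and "w \<in> V" "w \<notin> K" and "y \<in> K" "z \<in> K" "{w, y} \<in> E" "{y, z} \<in> E"
  shows "{w, z} \<in> E"
proof (rule ccontr)
  assume "{w, z} \<notin> E"
  have "z \<noteq> w" "z \<in> V" "y \<in> V"
    using \<open>w \<notin> K\<close> \<open>z \<in> K\<close> \<open>y \<in> K\<close> \<open>K \<subseteq> V\<close> by auto
  have not_z: "{u, z} \<notin> E" if "u \<in> K" "u \<noteq> y" "{u, y} \<notin> E" for u
    using P3_freeD[OF P3 \<open>u \<in> K\<close> \<open>z \<in> K\<close> \<open>y \<in> K\<close> \<open>u \<noteq> y\<close>] that \<open>{y, z} \<in> E\<close>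
    by (auto simp: insert_commute)
  have to_w: "{w, u} \<in> E" if "u \<in> K" "u \<noteq> y" "{u, y} \<notin> E" for u
  proof (rule ccontr)
    assume "{w, u} \<notin> E"
    then show False
      using P3P1_freeD[OF P31 \<open>z \<in> V\<close> \<open>y \<in> V\<close> \<open>w \<in> V\<close>, of u] not_z[OF that] that \<open>K \<subseteq> V\<close>
        \<open>z \<noteq> w\<close> \<open>{w, y} \<in> E\<close> \<open>{y, z} \<in> E\<close> \<open>{w, z} \<notin> E\<close>
      by (auto simp: insert_commute)
  qed
  define N where "N = {u. u = y \<or> {u, y} \<in> E}"
  have at_most_one: "\<not> (p \<in> N \<and> q \<in> N)" if "p \<in> K" "q \<in> K" "p \<noteq> q" "{p, q} \<notin> E" for p q
    using that P3_freeD[OF P3 \<open>p \<in> K\<close> \<open>y \<in> K\<close> \<open>q \<in> K\<close> \<open>p \<noteq> q\<close>] unfolding N_def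
    by (auto simp: insert_commute)
  obtain x1 x2 x3 where "x1 \<in> K" "x2 \<in> K" "x3 \<in> K" "x1 \<noteq> x2" "x2 \<noteq> x3" "x1 \<noteq> x3"
    and "{x1, x2} \<notin> E" "{x2, x3} \<notin> E" "{x1, x3} \<notin> E"
    using triple unfolding no_independent_triple_def by blast
  then obtain p q where "p \<in> K" "q \<in> K" "p \<noteq> q" "{p, q} \<notin> E" "p \<notin> N" "q \<notin> N"
    using at_most_one[of x1 x2] at_most_one[of x2 x3] at_most_one[of x1 x3] by (metis insert_commute)
  then have "p \<noteq> y" "{p, y} \<notin> E" "q \<noteq> y" "{q, y} \<notin> E"
    unfolding N_def by auto
  then show False
    using P3P1_freeD[OF P31 _ \<open>w \<in> V\<close> _ \<open>z \<in> V\<close>, of p q] to_w not_z \<open>p \<in> K\<close> \<open>q \<in> K\<close> \<open>K \<subseteq> V\<close>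
      \<open>p \<noteq> q\<close> \<open>{p, q} \<notin> E\<close> \<open>{w, z} \<notin> E\<close>
    by (auto simp: insert_commute)
qed

lemma P3_free_insert:
  assumes P31: "P3P1_free V E" and loops: "\<forall>u. {u, u} \<notin> E" and "K \<subseteq> V" and P3: "P3_free K E"
    and triple: "\<not> no_independent_triple K E" and "w \<in> V" "w \<notin> K" and "k \<in> K" "{k, w} \<notin> E"
  shows "P3_free (insert w K) E"
  unfolding P3_free_def
proof (intro ballI impI)
  note adj = P3P1_free_adjacent_to_clique[OF P31 \<open>K \<subseteq> V\<close> P3 triple \<open>w \<in> V\<close> \<open>w \<notin> K\<close>]
  fix x y z assume xyz: "x \<in> insert w K" "y \<in> insert w K" "z \<in> insert w K"
    and "x \<noteq> z \<and> {x, y} \<in> E \<and> {y, z} \<in> E"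
  then have "x \<noteq> z" "{x, y} \<in> E" "{y, z} \<in> E"
    by auto
  then have "x \<noteq> y" "y \<noteq> z"
    using loops by auto
  consider "x = w" | "z = w" | "y = w" | "x \<in> K" "y \<in> K" "z \<in> K"
    using xyz by blast
  then show "{x, z} \<in> E"
  proof cases
    case 1
    then show ?thesis
      using adj[of y z] xyz \<open>x \<noteq> y\<close> \<open>x \<noteq> z\<close> \<open>{x, y} \<in> E\<close> \<open>{y, z} \<in> E\<close> by auto
  next
    case 2
    then show ?thesis
      using adj[of y x] xyz \<open>y \<noteq> z\<close> \<open>x \<noteq> z\<close> \<open>{x, y} \<in> E\<close> \<open>{y, z} \<in> E\<close>
      by (auto simp: insert_commute)
  next
    case 3
    then have "x \<in> K" "z \<in> K" "{w, x} \<in> E" "{w, z} \<in> E"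
      using xyz \<open>x \<noteq> y\<close> \<open>y \<noteq> z\<close> \<open>{x, y} \<in> E\<close> \<open>{y, z} \<in> E\<close> by (auto simp: insert_commute)
    then have "{k, x} \<notin> E" "{k, z} \<notin> E"
      using adj[of x k] adj[of z k] \<open>k \<in> K\<close> \<open>{k, w} \<notin> E\<close> by (auto simp: insert_commute)
    then show ?thesis
      using P3P1_freeD[OF P31 _ \<open>w \<in> V\<close> _ _ \<open>x \<noteq> z\<close>, of k] \<open>x \<in> K\<close> \<open>z \<in> K\<close> \<open>k \<in> K\<close> \<open>K \<subseteq> V\<close>
        \<open>{w, x} \<in> E\<close> \<open>{w, z} \<in> E\<close> \<open>{k, w} \<notin> E\<close> by (auto simp: insert_commute)
  next
    case 4
    then show ?thesis
      using P3_freeD[OF P3] \<open>x \<noteq> z\<close> \<open>{x, y} \<in> E\<close> \<open>{y, z} \<in> E\<close> by blast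
  qed
qed

lemma decomposable_if_maximal_P3_free:
  assumes P31: "P3P1_free V E" and loops: "\<forall>u. {u, u} \<notin> E" and "K \<subseteq> V"
    and P3: "P3_free K E" and triple: "\<not> no_independent_triple K E"
    and maximal: "\<forall>w\<in>V - K. \<not> P3_free (insert w K) E"
  shows "decomposable V E"
proof (cases "K = V")
  case True
  obtain x y where "x \<in> K" "y \<in> K" "x \<noteq> y" "{x, y} \<notin> E"
    using triple unfolding no_independent_triple_def by blast
  then have "decomposable K E"
    by (rule decomposable_if_P3_free[OF P3])
  then show ?thesis
    using True by simp
next
  case False
  show ?thesis
  proof (cases "\<forall>k\<in>K. \<forall>w\<in>V - K. {k, w} \<in> E")
    case True
    moreover have "K \<noteq> {}"
      using triple unfolding no_independent_triple_def by blast
    ultimately show ?thesis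
      using decomposableI[of K "V - K" V E] \<open>K \<subseteq> V\<close> False by blast
  next
    case False
    then obtain k w where "k \<in> K" "w \<in> V" "w \<notin> K" "{k, w} \<notin> E"
      by blast
    then show ?thesis
      using P3_free_insert[OF P31 loops \<open>K \<subseteq> V\<close> P3 triple] maximal by blast
  qed
qed

lemma decomposable_if_P3P1_free:
  assumes "finite V" and P31: "P3P1_free V E" and loops: "\<forall>u. {u, u} \<notin> E"
    and triple: "\<not> no_independent_triple V E"
  shows "decomposable V E"
proof -
  obtain x y z where "x \<in> V" "y \<in> V" "z \<in> V" "x \<noteq> y" "y \<noteq> z" "x \<noteq> z"
    and "{x, y} \<notin> E" "{y, z} \<notin> E" "{x, z} \<notin> E"
    using triple unfolding no_independent_triple_def by blast
  define clusters where "clusters = {K. K \<subseteq> V \<and> P3_free K E \<and> \<not> no_independent_triple K E}"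
  have "\<forall>u\<in>{x, y, z}. \<forall>v\<in>{x, y, z}. {u, v} \<notin> E"
    using \<open>{x, y} \<notin> E\<close> \<open>{y, z} \<notin> E\<close> \<open>{x, z} \<notin> E\<close> loops by (auto simp: insert_commute)
  then have "P3_free {x, y, z} E"
    unfolding P3_free_def by blast
  moreover have "\<not> no_independent_triple {x, y, z} E"
    using \<open>x \<noteq> y\<close> \<open>y \<noteq> z\<close> \<open>x \<noteq> z\<close> \<open>{x, y} \<notin> E\<close> \<open>{y, z} \<notin> E\<close> \<open>{x, z} \<notin> E\<close>
    unfolding no_independent_triple_def by auto
  ultimately have "{x, y, z} \<in> clusters"
    using \<open>x \<in> V\<close> \<open>y \<in> V\<close> \<open>z \<in> V\<close> unfolding clusters_def by blast
  moreover have "finite clusters"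
    using \<open>finite V\<close> unfolding clusters_def by simp
  ultimately obtain K where "K \<in> clusters" and maximal: "\<forall>K'\<in>clusters. K \<subseteq> K' \<longrightarrow> K = K'"
    using finite_has_maximal[of clusters] by blast
  then have "K \<subseteq> V" and P3: "P3_free K E" and triple_K: "\<not> no_independent_triple K E"
    unfolding clusters_def by auto
  moreover have "\<not> P3_free (insert w K) E" if "w \<in> V - K" for w
  proof
    assume "P3_free (insert w K) E"
    moreover have "\<not> no_independent_triple (insert w K) E"
      using triple_K unfolding no_independent_triple_def by blast
    ultimately have "insert w K \<in> clusters"
      using \<open>K \<subseteq> V\<close> that unfolding clusters_def by blast
    then show False
      using maximal that by blast
  qed
  ultimately show ?thesis
    using decomposable_if_maximal_P3_free[OF P31 loops] by blast
qed

lemma mixing_above_chromatic_if_P3P1_free: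
  assumes "finite V" "P3P1_free V E" "\<forall>u. {u, u} \<notin> E"
  shows "mixing_above_chromatic V E"
proof (rule mixing_above_chromatic_hereditary_class[where Q = "\<lambda>W. P3P1_free W E"])
  fix W assume "P3P1_free W E" "finite W"
  then show "no_independent_triple W E \<or> decomposable W E"
    using decomposable_if_P3P1_free assms(3) by blast
qed (use assms P3P1_free_subset in auto)

section \<open>Colourings and induced subgraphs of simple graphs\<close>

lemma simple_graph_no_loop: "simple_graph V E \<Longrightarrow> {u, u} \<notin> E"
  unfolding simple_graph_def by (metis doubleton_eq_iff)

lemma simple_graph_edge_in: "simple_graph V E \<Longrightarrow> {u, v} \<in> E \<Longrightarrow> u \<in> V \<and> v \<in> V"
  unfolding simple_graph_def by (metis doubleton_eq_iff)

lemma colourings_iff: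
  assumes "simple_graph V E"
  shows "\<alpha> \<in> colourings V E l \<longleftrightarrow> proper_colouring V E {1..l} \<alpha> \<and> (\<forall>v. v \<notin> V \<longrightarrow> \<alpha> v = 0)"
  using simple_graph_edge_in[OF assms] unfolding colourings_def proper_colouring_def by blast

lemma recolour_rel_if_recolour_path:
  assumes G: "simple_graph V E" and "recolour_path V E {1..l} \<alpha> \<beta>" and \<alpha>: "\<alpha> \<in> colourings V E l"
  shows "(\<alpha>, \<beta>) \<in> (recolour_rel V E l)\<^sup>*"
  using assms(2)
proof induction
  case (step \<beta> \<gamma>)
  obtain v where "v \<in> V" and \<beta>: "proper_colouring V E {1..l} \<beta>" and \<gamma>: "proper_colouring V E {1..l} \<gamma>"
    and agree: "\<forall>u. u \<noteq> v \<longrightarrow> \<beta> u = \<gamma> u"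
    using step.hyps(2) unfolding recolour_step_def by blast
  have "\<beta> \<in> colourings V E l" "\<gamma> \<in> colourings V E l"
    using \<alpha> step.hyps \<beta> \<gamma> recolour_path_outside colourings_iff[OF G]
    by (metis rtrancl.rtrancl_into_rtrancl)+
  show ?case
  proof (cases "\<beta> = \<gamma>")
    case False
    then have "{u. \<beta> u \<noteq> \<gamma> u} = {v}"
      using agree by (auto simp: fun_eq_iff)
    then have "(\<beta>, \<gamma>) \<in> recolour_rel V E l"
      using \<open>\<beta> \<in> colourings V E l\<close> \<open>\<gamma> \<in> colourings V E l\<close> unfolding recolour_rel_def by simp
    then show ?thesis
      by (rule rtrancl_into_rtrancl[OF step.IH])
  qed (use step.IH in simp)
qed simp

lemma colourable_chromatic_number:
  assumes G: "simple_graph V E"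
  shows "colourable V E (chromatic_number V E)"
proof -
  obtain h where h: "bij_betw h V {0..<card V}"
    using ex_bij_betw_finite_nat G unfolding simple_graph_def by blast
  define \<alpha> where "\<alpha> u = (if u \<in> V then Suc (h u) else 0)" for u
  have "proper_colouring V E {1..card V} \<alpha>"
    unfolding proper_colouring_def
  proof (intro conjI ballI impI)
    show "\<alpha> ` V \<subseteq> {1..card V}"
      using bij_betw_apply[OF h] unfolding \<alpha>_def by fastforce
    fix u v assume "u \<in> V" "v \<in> V" "{u, v} \<in> E"
    then have "u \<noteq> v"
      using simple_graph_no_loop[OF G] by blast
    then show "\<alpha> u \<noteq> \<alpha> v"
      using h \<open>u \<in> V\<close> \<open>v \<in> V\<close> unfolding bij_betw_def inj_on_def \<alpha>_def by auto
  qed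
  then have "\<alpha> \<in> colourings V E (card V)"
    using colourings_iff[OF G] unfolding \<alpha>_def by simp
  then have "colourings V E (card V) \<noteq> {}"
    by blast
  then have "colourings V E (chromatic_number V E) \<noteq> {}"
    unfolding chromatic_number_def by (rule LeastI)
  then obtain \<gamma> where "proper_colouring V E {1..chromatic_number V E} \<gamma>"
    using colourings_iff[OF G] by blast
  then show ?thesis
    unfolding colourable_def by (intro exI[of _ "{1..chromatic_number V E}"]) auto
qed

lemma mixing_if_mixing_above_chromatic:
  assumes G: "simple_graph V E" and mix: "mixing_above_chromatic V E" and "chromatic_number V E < l"
  shows "mixing V E l"
  unfolding mixing_def
proof (intro ballI)
  fix \<alpha> \<beta> assume \<alpha>: "\<alpha> \<in> colourings V E l" and \<beta>: "\<beta> \<in> colourings V E l"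
  have "recolour_path V E {1..l} \<alpha> \<beta>"
    using mixing_above_chromaticD[OF mix _ colourable_chromatic_number[OF G]] \<open>chromatic_number V E < l\<close>
      \<alpha> \<beta> colourings_iff[OF G] by simp
  then show "(\<alpha>, \<beta>) \<in> (recolour_rel V E l)\<^sup>*"
    by (rule recolour_rel_if_recolour_path[OF G _ \<alpha>])
qed

definition induced_embedding :: "('a \<Rightarrow> 'b) \<Rightarrow> 'a set \<Rightarrow> 'a set set \<Rightarrow> 'b set \<Rightarrow> 'b set set \<Rightarrow> bool" where
  "induced_embedding f VH EH VG EG \<longleftrightarrow>
     inj_on f VH \<and> f ` VH \<subseteq> VG \<and> (\<forall>u\<in>VH. \<forall>v\<in>VH. {u, v} \<in> EH \<longleftrightarrow> {f u, f v} \<in> EG)"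

lemma induced_subgraph_iff_embedding:
  "induced_subgraph VH EH VG EG \<longleftrightarrow> (\<exists>f. induced_embedding f VH EH VG EG)"
  unfolding induced_subgraph_def induced_embedding_def ..

lemma induced_embedding_comp:
  assumes "induced_embedding f VH EH VG EG" "induced_embedding g VG EG VK EK"
  shows "induced_embedding (g \<circ> f) VH EH VK EK"
  using assms unfolding induced_embedding_def
  by (auto simp: image_subset_iff intro: comp_inj_on inj_on_subset)

lemma induced_embedding_restrict:
  "induced_embedding f VH EH VG EG \<Longrightarrow> f ` VH \<subseteq> S \<Longrightarrow> induced_embedding f VH EH S EG"
  unfolding induced_embedding_def by blast

lemma induced_subgraph_of_image:
  assumes "induced_embedding f VH EH VG EG"
  shows "induced_subgraph (f ` VH) EG VH EH"
  unfolding induced_subgraph_iff_embedding induced_embedding_def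
proof (intro exI conjI)
  have "inj_on f VH"
    using assms unfolding induced_embedding_def by blast
  then show "inj_on (inv_into VH f) (f ` VH)" "inv_into VH f ` f ` VH \<subseteq> VH"
    by (auto simp: inj_on_inv_into inv_into_into)
  show "\<forall>u\<in>f ` VH. \<forall>v\<in>f ` VH. {u, v} \<in> EG \<longleftrightarrow> {inv_into VH f u, inv_into VH f v} \<in> EH"
    using assms \<open>inj_on f VH\<close> unfolding induced_embedding_def by auto
qed

lemma induced_subgraph_subset: "S \<subseteq> T \<Longrightarrow> induced_subgraph S E T E"
  unfolding induced_subgraph_def by (intro exI[of _ id]) auto

lemma induced_subgraph_trans:
  "induced_subgraph A EA B EB \<Longrightarrow> induced_subgraph B EB C EC \<Longrightarrow> induced_subgraph A EA C EC"
  unfolding induced_subgraph_iff_embedding using induced_embedding_comp by blast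

lemma induced_subgraph_P4_if_not_P4_free:
  assumes G: "simple_graph V E" and "\<not> P4_free V E"
  shows "induced_subgraph P4_V P4_E V E"
proof -
  obtain a b c d where "a \<in> V" "b \<in> V" "c \<in> V" "d \<in> V"
    and E: "{a, b} \<in> E" "{b, c} \<in> E" "{c, d} \<in> E" "{a, c} \<notin> E" "{a, d} \<notin> E" "{b, d} \<notin> E"
    using assms(2) unfolding P4_free_def by blast
  moreover have "{u, u} \<notin> E" for u
    using simple_graph_no_loop[OF G] .
  ultimately have "a \<noteq> b" "b \<noteq> c" "c \<noteq> d" "a \<noteq> c" "a \<noteq> d" "b \<noteq> d"
    by (metis insert_commute)+
  define f :: "nat \<Rightarrow> 'a" where "f i = [a, b, c, d] ! i" for i
  have "inj_on f P4_V" "f ` P4_V \<subseteq> V"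
    using \<open>a \<noteq> b\<close> \<open>b \<noteq> c\<close> \<open>c \<noteq> d\<close> \<open>a \<noteq> c\<close> \<open>a \<noteq> d\<close> \<open>b \<noteq> d\<close> \<open>a \<in> V\<close> \<open>b \<in> V\<close> \<open>c \<in> V\<close> \<open>d \<in> V\<close>
    unfolding inj_on_def P4_V_def f_def by auto
  moreover have "\<forall>u\<in>P4_V. \<forall>v\<in>P4_V. {u, v} \<in> P4_E \<longleftrightarrow> {f u, f v} \<in> E"
    using E simple_graph_no_loop[OF G] unfolding P4_V_def P4_E_def f_def
    by (simp add: doubleton_eq_iff insert_commute)
  ultimately show ?thesis
    unfolding induced_subgraph_def by blast
qed

lemma induced_subgraph_P3P1_if_not_P3P1_free:
  assumes G: "simple_graph V E" and "\<not> P3P1_free V E"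
  shows "induced_subgraph P3P1_V P3P1_E V E"
proof -
  obtain a b c d where "a \<in> V" "b \<in> V" "c \<in> V" "d \<in> V" "a \<noteq> c"
    and E: "{a, b} \<in> E" "{b, c} \<in> E" "{a, c} \<notin> E" "{d, a} \<notin> E" "{d, b} \<notin> E" "{d, c} \<notin> E"
    using assms(2) unfolding P3P1_free_def by blast
  moreover have "{u, u} \<notin> E" for u
    using simple_graph_no_loop[OF G] .
  ultimately have "a \<noteq> b" "b \<noteq> c" "a \<noteq> d" "b \<noteq> d" "c \<noteq> d"
    by (metis insert_commute)+
  define f :: "nat \<Rightarrow> 'a" where "f i = [a, b, c, d] ! i" for i
  have "inj_on f P3P1_V" "f ` P3P1_V \<subseteq> V"
    using \<open>a \<noteq> b\<close> \<open>b \<noteq> c\<close> \<open>a \<noteq> c\<close> \<open>a \<noteq> d\<close> \<open>b \<noteq> d\<close> \<open>c \<noteq> d\<close> \<open>a \<in> V\<close> \<open>b \<in> V\<close> \<open>c \<in> V\<close> \<open>d \<in> V\<close>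
    unfolding inj_on_def P3P1_V_def f_def by auto
  moreover have "\<forall>u\<in>P3P1_V. \<forall>v\<in>P3P1_V. {u, v} \<in> P3P1_E \<longleftrightarrow> {f u, f v} \<in> E"
    using E simple_graph_no_loop[OF G] unfolding P3P1_V_def P3P1_E_def f_def
    by (simp add: doubleton_eq_iff insert_commute)
  ultimately show ?thesis
    unfolding induced_subgraph_def by blast
qed

lemma mixing_if_free_of_subgraph_of_P4_or_P3P1:
  assumes H: "induced_subgraph VH EH P4_V P4_E \<or> induced_subgraph VH EH P3P1_V P3P1_E"
    and G: "simple_graph V E" and H_free: "\<not> induced_subgraph VH EH V E"
    and "l \<ge> chromatic_number V E + 1"
  shows "mixing V E l"
proof -
  have "finite V"
    using G unfolding simple_graph_def by blast
  have "P4_free V E \<or> P3P1_free V E"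
    using H H_free induced_subgraph_trans induced_subgraph_P4_if_not_P4_free[OF G]
      induced_subgraph_P3P1_if_not_P3P1_free[OF G] by blast
  then have "mixing_above_chromatic V E"
    using mixing_above_chromatic_if_P4_free mixing_above_chromatic_if_P3P1_free \<open>finite V\<close>
      simple_graph_no_loop[OF G] by blast
  then show ?thesis
    using mixing_if_mixing_above_chromatic[OF G] \<open>l \<ge> chromatic_number V E + 1\<close> by simp
qed

section \<open>Induced subgraphs of \<open>C\<^sub>6\<close>\<close>

definition C6_V :: "nat set" where "C6_V = {0, 1, 2, 3, 4, 5}"
definition C6_E :: "nat set set" where "C6_E = {{0, 1}, {1, 2}, {2, 3}, {3, 4}, {4, 5}, {5, 0}}"

definition twoK2_V :: "nat set" where "twoK2_V = {0, 1, 2, 3}"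
definition twoK2_E :: "nat set set" where "twoK2_E = {{0, 1}, {2, 3}}"

definition C6_rotate :: "nat \<Rightarrow> nat" where "C6_rotate x = (if x = 5 then 0 else Suc x)"

lemma induced_embedding_C6_rotate: "induced_embedding C6_rotate C6_V C6_E C6_V C6_E"
  unfolding induced_embedding_def C6_V_def C6_E_def C6_rotate_def inj_on_def
  by (simp add: doubleton_eq_iff)

lemma induced_embedding_C6_rotate_power: "induced_embedding (C6_rotate ^^ k) C6_V C6_E C6_V C6_E"
proof (induction k)
  case 0
  show ?case
    by (simp add: induced_embedding_def)
next
  case (Suc k)
  show ?case
    using induced_embedding_comp[OF Suc.IH induced_embedding_C6_rotate] by (simp only: funpow.simps(2))
qed

lemma C6_rotate_power_to_5: "i \<in> C6_V \<Longrightarrow> (C6_rotate ^^ (5 - i)) i = 5"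
  unfolding C6_V_def C6_rotate_def by (auto simp: numeral_eq_Suc)

lemma C6_embedding_avoiding_5:
  assumes f: "induced_embedding f VH EH C6_V C6_E" and "i \<in> C6_V" "i \<notin> f ` VH"
  shows "induced_embedding (C6_rotate ^^ (5 - i) \<circ> f) VH EH {0, 1, 2, 3, 4} C6_E"
proof (rule induced_embedding_restrict)
  let ?r = "C6_rotate ^^ (5 - i)"
  show emb: "induced_embedding (?r \<circ> f) VH EH C6_V C6_E"
    using induced_embedding_comp[OF f induced_embedding_C6_rotate_power] .
  have "inj_on ?r C6_V" "f ` VH \<subseteq> C6_V"
    using induced_embedding_C6_rotate_power f unfolding induced_embedding_def by blast+
  then have "?r (f x) \<noteq> ?r i" if "x \<in> VH" for x
    using \<open>i \<in> C6_V\<close> \<open>i \<notin> f ` VH\<close> that unfolding inj_on_def by blast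
  then have "5 \<notin> (?r \<circ> f) ` VH"
    using C6_rotate_power_to_5[OF \<open>i \<in> C6_V\<close>] by auto
  moreover have "(?r \<circ> f) ` VH \<subseteq> C6_V"
    using emb unfolding induced_embedding_def by blast
  ultimately show "(?r \<circ> f) ` VH \<subseteq> {0, 1, 2, 3, 4}"
    unfolding C6_V_def by auto
qed

lemmas C6_embedding_simps = induced_embedding_def inj_on_def C6_E_def P4_V_def P4_E_def
  P3P1_V_def P3P1_E_def twoK2_V_def twoK2_E_def doubleton_eq_iff

lemma C6_induced_subgraphs:
  "induced_subgraph {0, 1, 2, 3} C6_E P4_V P4_E"
  "induced_subgraph {1, 2, 3, 4} C6_E P4_V P4_E"
  "induced_subgraph {0, 2, 3, 4} C6_E P3P1_V P3P1_E"
  "induced_subgraph {0, 1, 2, 4} C6_E P3P1_V P3P1_E"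
  "induced_subgraph twoK2_V twoK2_E {0, 1, 3, 4} C6_E"
  unfolding induced_subgraph_iff_embedding
proof -
  show "\<exists>f. induced_embedding f {0, 1, 2, 3} C6_E P4_V P4_E"
    by (intro exI[of _ id]) (simp add: C6_embedding_simps)
  show "\<exists>f. induced_embedding f {1, 2, 3, 4} C6_E P4_V P4_E"
    by (intro exI[of _ "\<lambda>x. x - 1"]) (simp add: C6_embedding_simps)
  show "\<exists>f. induced_embedding f {0, 2, 3, 4} C6_E P3P1_V P3P1_E"
    by (intro exI[of _ "\<lambda>x. if x = 0 then 3 else x - 2"]) (simp add: C6_embedding_simps)
  show "\<exists>f. induced_embedding f {0, 1, 2, 4} C6_E P3P1_V P3P1_E"
    by (intro exI[of _ "\<lambda>x. if x = 4 then 3 else x"]) (simp add: C6_embedding_simps)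
  show "\<exists>f. induced_embedding f twoK2_V twoK2_E {0, 1, 3, 4} C6_E"
    by (intro exI[of _ "\<lambda>x. if x < 2 then x else x + 1"]) (simp add: C6_embedding_simps)
qed

lemma C6_image_not_containing_twoK2:
  assumes g: "induced_embedding g VH EH VG C6_E" and "\<not> induced_subgraph twoK2_V twoK2_E VH EH"
  shows "\<not> {0, 1, 3, 4} \<subseteq> g ` VH"
proof
  assume "{0, 1, 3, 4} \<subseteq> g ` VH"
  then have "induced_subgraph {0, 1, 3, 4} C6_E (g ` VH) C6_E"
    by (rule induced_subgraph_subset)
  then have "induced_subgraph twoK2_V twoK2_E (g ` VH) C6_E"
    by (rule induced_subgraph_trans[OF C6_induced_subgraphs(5)])
  then show False
    using assms(2) induced_subgraph_of_image[OF g] induced_subgraph_trans by blast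
qed

lemma induced_subgraph_P4_or_P3P1_if_in_C6:
  assumes "induced_subgraph VH EH C6_V C6_E" and twoK2_free: "\<not> induced_subgraph twoK2_V twoK2_E VH EH"
  shows "induced_subgraph VH EH P4_V P4_E \<or> induced_subgraph VH EH P3P1_V P3P1_E"
proof -
  obtain f where f: "induced_embedding f VH EH C6_V C6_E"
    using assms(1) unfolding induced_subgraph_iff_embedding by blast
  then obtain i where "i \<in> {0, 1, 3, 4}" "i \<notin> f ` VH"
    using C6_image_not_containing_twoK2[OF f twoK2_free] by blast
  then have "i \<in> C6_V"
    unfolding C6_V_def by auto
  define g where "g = C6_rotate ^^ (5 - i) \<circ> f"
  have g: "induced_embedding g VH EH {0, 1, 2, 3, 4} C6_E"
    unfolding g_def by (rule C6_embedding_avoiding_5[OF f \<open>i \<in> C6_V\<close> \<open>i \<notin> f ` VH\<close>])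
  have into: "induced_subgraph VH EH S C6_E" if "g ` VH \<subseteq> S" for S
    using induced_embedding_restrict[OF g that] unfolding induced_subgraph_iff_embedding by blast
  obtain x where "x \<in> {0, 1, 3, 4}" "x \<notin> g ` VH"
    using C6_image_not_containing_twoK2[OF g twoK2_free] by blast
  moreover have "g ` VH \<subseteq> {0, 1, 2, 3, 4}"
    using g by (simp add: induced_embedding_def)
  ultimately have "g ` VH \<subseteq> {0, 1, 2, 3, 4} - {x}"
    by (simp add: subset_Diff_insert)
  then consider "g ` VH \<subseteq> {1, 2, 3, 4}" | "g ` VH \<subseteq> {0, 2, 3, 4}" | "g ` VH \<subseteq> {0, 1, 2, 4}"
    | "g ` VH \<subseteq> {0, 1, 2, 3}"
    using \<open>x \<in> {0, 1, 3, 4}\<close> by (auto simp: insert_Diff_if)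
  then show ?thesis
  proof cases
    case 1
    then show ?thesis
      using induced_subgraph_trans[OF into C6_induced_subgraphs(2)] by blast
  next
    case 2
    then show ?thesis
      using induced_subgraph_trans[OF into C6_induced_subgraphs(3)] by blast
  next
    case 3
    then show ?thesis
      using induced_subgraph_trans[OF into C6_induced_subgraphs(4)] by blast
  next
    case 4
    then show ?thesis
      using induced_subgraph_trans[OF into C6_induced_subgraphs(1)] by blast
  qed
qed

section \<open>Graphs that are not mixing above the chromatic number\<close>

lemma chromatic_number_le: "\<gamma> \<in> colourings V E k \<Longrightarrow> chromatic_number V E \<le> k"
  unfolding chromatic_number_def by (rule Least_le) blast

lemma not_mixing_if_frozen:
  assumes G: "simple_graph V E" and \<alpha>: "\<alpha> \<in> colourings V E l" and "\<beta> \<in> colourings V E l" "\<alpha> \<noteq> \<beta>"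
    and frozen: "\<forall>v\<in>V. \<forall>c\<in>{1..l}. c \<noteq> \<alpha> v \<longrightarrow> (\<exists>u\<in>V. {u, v} \<in> E \<and> \<alpha> u = c)"
  shows "\<not> mixing V E l"
proof
  assume "mixing V E l"
  then have "(\<alpha>, \<beta>) \<in> (recolour_rel V E l)\<^sup>*"
    using \<alpha> \<open>\<beta> \<in> colourings V E l\<close> unfolding mixing_def by blast
  then obtain \<gamma> where "(\<alpha>, \<gamma>) \<in> recolour_rel V E l"
    using \<open>\<alpha> \<noteq> \<beta>\<close> by (cases rule: converse_rtranclE) auto
  then have \<gamma>: "\<gamma> \<in> colourings V E l" and "card {v. \<alpha> v \<noteq> \<gamma> v} = 1"
    unfolding recolour_rel_def by auto
  then obtain v where v: "{u. \<alpha> u \<noteq> \<gamma> u} = {v}"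
    using card_1_singletonE by blast
  then have "\<alpha> v \<noteq> \<gamma> v" and same: "\<And>u. u \<noteq> v \<Longrightarrow> \<alpha> u = \<gamma> u"
    by auto
  have "v \<in> V"
  proof (rule ccontr)
    assume "v \<notin> V"
    then have "\<alpha> v = 0" "\<gamma> v = 0"
      using \<alpha> \<gamma> unfolding colourings_def by blast+
    then show False
      using \<open>\<alpha> v \<noteq> \<gamma> v\<close> by simp
  qed
  then have "\<gamma> v \<in> {1..l}"
    using \<gamma> unfolding colourings_def by blast
  then obtain u where "{u, v} \<in> E" "\<alpha> u = \<gamma> v"
    using frozen \<open>v \<in> V\<close> \<open>\<alpha> v \<noteq> \<gamma> v\<close> by metis
  moreover have "u \<noteq> v"
    using \<open>{u, v} \<in> E\<close> simple_graph_no_loop[OF G] by blast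
  ultimately have "\<gamma> u = \<gamma> v"
    using same by metis
  then show False
    using \<gamma> \<open>{u, v} \<in> E\<close> unfolding colourings_def by blast
qed

lemma simple_graph_empty: "finite V \<Longrightarrow> simple_graph V {}"
  unfolding simple_graph_def by blast

lemma simple_graph_insert:
  "simple_graph V E \<Longrightarrow> u \<noteq> v \<Longrightarrow> u \<in> V \<Longrightarrow> v \<in> V \<Longrightarrow> simple_graph V (insert {u, v} E)"
  unfolding simple_graph_def by blast

lemma C6_simple: "simple_graph C6_V C6_E"
  unfolding C6_E_def by (intro simple_graph_insert simple_graph_empty) (simp_all add: C6_V_def)

lemma C6_not_mixing: "\<not> mixing C6_V C6_E 3"
proof (rule not_mixing_if_frozen[OF C6_simple])
  show "(\<lambda>x. if x \<in> C6_V then x mod 3 + 1 else 0) \<in> colourings C6_V C6_E 3"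
    "(\<lambda>x. if x \<in> C6_V then (x + 1) mod 3 + 1 else 0) \<in> colourings C6_V C6_E 3"
    unfolding colourings_def C6_V_def C6_E_def by (auto simp: doubleton_eq_iff)
  show "(\<lambda>x. if x \<in> C6_V then x mod 3 + 1 else 0) \<noteq> (\<lambda>x. if x \<in> C6_V then (x + 1) mod 3 + 1 else 0)"
    by (auto simp: fun_eq_iff C6_V_def)
  have "{1..3::nat} = {1, 2, 3}"
    by auto
  then show "\<forall>v\<in>C6_V. \<forall>c\<in>{1..3}. c \<noteq> (if v \<in> C6_V then v mod 3 + 1 else 0) \<longrightarrow>
      (\<exists>u\<in>C6_V. {u, v} \<in> C6_E \<and> (if u \<in> C6_V then u mod 3 + 1 else 0) = c)"
    unfolding C6_V_def C6_E_def by (simp add: doubleton_eq_iff)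
qed

lemma C6_chromatic_number: "chromatic_number C6_V C6_E \<le> 2"
proof (rule chromatic_number_le)
  show "(\<lambda>x. if x \<in> C6_V then x mod 2 + 1 else 0) \<in> colourings C6_V C6_E 2"
    unfolding colourings_def C6_V_def C6_E_def by (auto simp: doubleton_eq_iff)
qed

text \<open>A \<open>2K\<^sub>2\<close>-free graph with a proper 4-colouring for which \<open>x \<mapsto> x div 2 + 1\<close> is a frozen
  5-colouring: every vertex sees all four other colours.\<close>
definition G10_V :: "nat set" where "G10_V = {0, 1, 2, 3, 4, 5, 6, 7, 8, 9}"

definition G10_adj :: "nat \<Rightarrow> nat list" where
  "G10_adj v = [[2, 3, 4, 5, 6, 7, 8], [2, 3, 5, 7, 8, 9], [0, 1, 4, 6, 7, 8, 9], [0, 1, 4, 5, 6, 9],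
     [0, 2, 3, 7, 8, 9], [0, 1, 3, 6, 7, 8], [0, 2, 3, 5, 8, 9], [0, 1, 2, 4, 5, 9], [0, 1, 2, 4, 5, 6],
     [1, 2, 3, 4, 6, 7]] ! v"

definition G10_E :: "nat set set" where "G10_E = {{u, v} | u v. u \<in> G10_V \<and> v \<in> set (G10_adj u)}"

lemma G10_adj_symmetric: "\<forall>u\<in>G10_V. \<forall>v\<in>set (G10_adj u). v \<in> G10_V \<and> v \<noteq> u \<and> u \<in> set (G10_adj v)"
  by (simp add: G10_V_def G10_adj_def)

lemma G10_edge_iff: "{u, v} \<in> G10_E \<longleftrightarrow> u \<in> G10_V \<and> v \<in> set (G10_adj u)"
  unfolding G10_E_def using G10_adj_symmetric by (auto simp: doubleton_eq_iff)

lemma G10_simple: "simple_graph G10_V G10_E"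
  unfolding simple_graph_def
proof
  show "finite G10_V"
    by (simp add: G10_V_def)
  show "\<forall>e\<in>G10_E. \<exists>u v. e = {u, v} \<and> u \<noteq> v \<and> u \<in> G10_V \<and> v \<in> G10_V"
    unfolding G10_E_def using G10_adj_symmetric by blast
qed

lemma G10_colouringI:
  assumes "\<forall>u\<in>G10_V. \<alpha> u \<in> {1..k}" "\<forall>u. u \<notin> G10_V \<longrightarrow> \<alpha> u = 0"
    and "\<forall>u\<in>G10_V. \<forall>v\<in>set (G10_adj u). \<alpha> u \<noteq> \<alpha> v"
  shows "\<alpha> \<in> colourings G10_V G10_E k"
  using assms unfolding colourings_def G10_edge_iff by blast

lemma G10_chromatic_number: "chromatic_number G10_V G10_E \<le> 4"
proof (rule chromatic_number_le, rule G10_colouringI)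
  let ?\<gamma> = "\<lambda>x. if x \<in> G10_V then [1, 3, 2, 4, 3, 2, 3, 4, 4, 1 :: nat] ! x else 0"
  show "\<forall>u\<in>G10_V. ?\<gamma> u \<in> {1..4}" "\<forall>u. u \<notin> G10_V \<longrightarrow> ?\<gamma> u = 0"
    "\<forall>u\<in>G10_V. \<forall>v\<in>set (G10_adj u). ?\<gamma> u \<noteq> ?\<gamma> v"
    by (simp_all add: G10_V_def G10_adj_def)
qed

lemma G10_not_mixing: "\<not> mixing G10_V G10_E 5"
proof (rule not_mixing_if_frozen[OF G10_simple])
  let ?\<alpha> = "\<lambda>x. if x \<in> G10_V then x div 2 + 1 else 0"
  let ?\<beta> = "\<lambda>x. if x \<in> G10_V then (x div 2 + 1) mod 5 + 1 else 0"
  show "?\<alpha> \<in> colourings G10_V G10_E 5" "?\<beta> \<in> colourings G10_V G10_E 5"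
    by (rule G10_colouringI; simp add: G10_V_def G10_adj_def)+
  show "?\<alpha> \<noteq> ?\<beta>"
    by (auto simp: fun_eq_iff G10_V_def)
  have "{1..5::nat} = {1, 2, 3, 4, 5}"
    by auto
  then show "\<forall>v\<in>G10_V. \<forall>c\<in>{1..5}. c \<noteq> ?\<alpha> v \<longrightarrow> (\<exists>u\<in>G10_V. {u, v} \<in> G10_E \<and> ?\<alpha> u = c)"
    unfolding G10_edge_iff by (simp add: G10_V_def G10_adj_def)
qed

lemma G10_twoK2_free: "\<not> induced_subgraph twoK2_V twoK2_E G10_V G10_E"
proof
  have edges_joined: "\<forall>a\<in>G10_V. \<forall>b\<in>set (G10_adj a). \<forall>c\<in>G10_V. \<forall>d\<in>set (G10_adj c).
      c \<in> set (G10_adj a) \<or> d \<in> set (G10_adj a) \<or> c \<in> set (G10_adj b) \<or> d \<in> set (G10_adj b)"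
    by (simp add: G10_V_def G10_adj_def)
  assume "induced_subgraph twoK2_V twoK2_E G10_V G10_E"
  then obtain f
    where f: "\<forall>u\<in>twoK2_V. \<forall>v\<in>twoK2_V. {u, v} \<in> twoK2_E \<longleftrightarrow> {f u, f v} \<in> G10_E"
    unfolding induced_subgraph_def by blast
  then have "{f 0, f 1} \<in> G10_E" "{f 2, f 3} \<in> G10_E" "{f 0, f 2} \<notin> G10_E" "{f 0, f 3} \<notin> G10_E"
    "{f 1, f 2} \<notin> G10_E" "{f 1, f 3} \<notin> G10_E"
    unfolding twoK2_V_def twoK2_E_def by (simp_all add: doubleton_eq_iff)
  then show False
    using edges_joined G10_adj_symmetric unfolding G10_edge_iff by metis
qed

theorem theorem3:
  fixes VH :: "'a set" and EH :: "'a set set"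
  assumes "simple_graph VH EH"
  shows "(\<forall>(V :: nat set) E. simple_graph V E \<and> \<not> induced_subgraph VH EH V E \<longrightarrow>
            (\<forall>l. l \<ge> chromatic_number V E + 1 \<longrightarrow> mixing V E l))
         \<longleftrightarrow> (induced_subgraph VH EH P4_V P4_E \<or> induced_subgraph VH EH P3P1_V P3P1_E)"
proof
  assume mixing: "\<forall>(V :: nat set) E. simple_graph V E \<and> \<not> induced_subgraph VH EH V E \<longrightarrow>
    (\<forall>l. l \<ge> chromatic_number V E + 1 \<longrightarrow> mixing V E l)"
  have "induced_subgraph VH EH C6_V C6_E"
    using mixing C6_simple C6_not_mixing C6_chromatic_number by force
  moreover have "induced_subgraph VH EH G10_V G10_E"
    using mixing G10_simple G10_not_mixing G10_chromatic_number by force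
  then have "\<not> induced_subgraph twoK2_V twoK2_E VH EH"
    using G10_twoK2_free induced_subgraph_trans by blast
  ultimately show "induced_subgraph VH EH P4_V P4_E \<or> induced_subgraph VH EH P3P1_V P3P1_E"
    by (rule induced_subgraph_P4_or_P3P1_if_in_C6)
next
  assume "induced_subgraph VH EH P4_V P4_E \<or> induced_subgraph VH EH P3P1_V P3P1_E"
  then show "\<forall>(V :: nat set) E. simple_graph V E \<and> \<not> induced_subgraph VH EH V E \<longrightarrow>
      (\<forall>l. l \<ge> chromatic_number V E + 1 \<longrightarrow> mixing V E l)"
    using mixing_if_free_of_subgraph_of_P4_or_P3P1 by blast
qed

end
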